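(* Let $\mu_1,\dots,\mu_6\in\mathbb{C}$ be such that $g_2=\frac1{12}(4\mu_2+\mu_1^2)^2-2(\mu_1\mu_3+2\mu_4)$ and $g_3=\frac16(\mu_1\mu_3+2\mu_4)(4\mu_2+\mu_1^2)-\frac1{216}(4\mu_2+\mu_1^2)^3-4\mu_6-\mu_3^2$ satisfy $g_2^3-27g_3^2\ne0$, and let $\wp,\sigma,\zeta$ be the Weierstrass functions with these invariants. Choose $v,w$ with $\wp(v)=\frac1{12}(4\mu_2+\mu_1^2)$, $\wp'(w)=-\mu_3$, assume $\wp'(v)\ne0$ and put $\alpha=\wp'(w)/\wp'(v)$. Let $f$ be the exponential of the elliptic formal group law $F_\mu$, and let $\Psi$ be the solution near $u=0$ of $\Psi'+\frac{1}{f(u)}\Psi=0$ with $\lim_{u\to0}(\Psi(u)-\frac1u)$ finite. Then, near $u=0$, \[ \frac{1}{\Psi(u)}=\Phi(u;v)^{-1}\exp\Big(\frac{\mu_1}{2}u\Big)\Big(\frac{\Phi(u;v)}{\Phi(u;-v)}\Big)^{\frac12(1-\alpha)}, \] where $\Phi(u;v)=\frac{\sigma(v-u)}{\sigma(u)\sigma(v)}\exp(\zeta(v)u)$ and the power is the branch equal to $1$ at $u=0$.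
   Context: The elliptic formal group law $F_\mu$: on the cubic $Y^2Z+\mu_1XYZ+\mu_3YZ^2=X^3+\mu_2X^2Z+\mu_4XZ^2+\mu_6Z^3$ with chord-tangent group law (neutral element $O=(0:1:0)$, three collinear points sum to zero), Tate coordinates $t=-X/Y$, $s=-Z/Y$ give $s=t^3+\mu_1ts+\mu_2t^2s+\mu_3s^2+\mu_4ts^2+\mu_6s^3$ with $s(t)$ the power series solution with $s(0)=0$; $F_\mu(t_1,t_2)$ gives the $t$-coordinate of $P_1+P_2$ for $P_i=(t_i,s(t_i))$. Its exponential is the series $f$ with $f(0)=0$, $f'(0)=1$, $f(u+v)=F_\mu(f(u),f(v))$. $\wp'^2=4\wp^3-g_2\wp-g_3$, $\sigma$ is the Weierstrass sigma function (entire, odd, $\sigma(u)=u+O(u^5)$), $\zeta=\sigma'/\sigma$. The Hirzebruch genus with exponential $1/\Psi$ is called the general Krichever genus. *)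

theory Defs
  imports "HOL-Complex_Analysis.Complex_Analysis"
begin

definition wzeta :: "(complex \<Rightarrow> complex) \<Rightarrow> complex \<Rightarrow> complex" where
  "wzeta \<sigma> u = deriv \<sigma> u / \<sigma> u"

definition wp :: "(complex \<Rightarrow> complex) \<Rightarrow> complex \<Rightarrow> complex" where
  "wp \<sigma> u = - deriv (wzeta \<sigma>) u"

text \<open>These conditions determine sigma uniquely.\<close>

definition is_weierstrass_sigma :: "complex \<Rightarrow> complex \<Rightarrow> (complex \<Rightarrow> complex) \<Rightarrow> bool" where
  "is_weierstrass_sigma g2 g3 \<sigma> \<longleftrightarrow>
     \<sigma> holomorphic_on UNIV \<and>
     (\<forall>u. \<sigma> (- u) = - \<sigma> u) \<and>
     (\<exists>h. h holomorphic_on UNIV \<and> (\<forall>u. \<sigma> u = u + u ^ 5 * h u)) \<and>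
     (\<forall>u. \<sigma> u \<noteq> 0 \<longrightarrow>
        (deriv (wp \<sigma>) u) ^ 2 = 4 * (wp \<sigma> u) ^ 3 - g2 * wp \<sigma> u - g3)"

definition wPhi :: "(complex \<Rightarrow> complex) \<Rightarrow> complex \<Rightarrow> complex \<Rightarrow> complex" where
  "wPhi \<sigma> u v = \<sigma> (v - u) / (\<sigma> u * \<sigma> v) * exp (wzeta \<sigma> v * u)"

text \<open>The cubic in Tate coordinates t = -X/Y, s = -Z/Y.\<close>

definition tate_eq :: "complex \<Rightarrow> complex \<Rightarrow> complex \<Rightarrow> complex \<Rightarrow> complex \<Rightarrow> complex \<Rightarrow> complex \<Rightarrow> bool" where
  "tate_eq m1 m2 m3 m4 m6 t s \<longleftrightarrow>
     s = t ^ 3 + m1 * t * s + m2 * t ^ 2 * s + m3 * s ^ 2 + m4 * t * s ^ 2 + m6 * s ^ 3"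

text \<open>s is (the sum of) the power series solution s(t) with s(0) = 0, i.e. an analytic
  solution of the Tate equation near 0 with s(0) = 0 (unique by the implicit function theorem).\<close>

definition tate_s :: "complex \<Rightarrow> complex \<Rightarrow> complex \<Rightarrow> complex \<Rightarrow> complex \<Rightarrow> real \<Rightarrow> (complex \<Rightarrow> complex) \<Rightarrow> bool" where
  "tate_s m1 m2 m3 m4 m6 r s \<longleftrightarrow>
     r > 0 \<and> s holomorphic_on ball 0 r \<and> s 0 = 0 \<and>
     (\<forall>t\<in>ball 0 r. tate_eq m1 m2 m3 m4 m6 t (s t))"

text \<open>Chord-tangent law near O. Points P_i = (t_i, s(t_i)). The line through P1, P2
  (tangent line if P1 = P2) is s = lam * t + nu.  Substituting it into the Tate equation gives
  a cubic in t with leading coefficient -(1 + m2 lam + m4 lam^2 + m6 lam^3) and t^2-coefficient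
  -(m1 lam + m2 nu + m3 lam^2 + 2 m4 lam nu + 3 m6 lam^2 nu); its roots are t1, t2, t3, so the
  third intersection P3 = (t3, lam t3 + nu) is given by Vieta.  Then P1 + P2 = - P3, and the
  negation (x,y) |-> (x, -y - m1 x - m3) reads t |-> -t / (1 - m1 t - m3 s) in Tate coordinates.\<close>

definition chord_slope :: "(complex \<Rightarrow> complex) \<Rightarrow> complex \<Rightarrow> complex \<Rightarrow> complex" where
  "chord_slope s t1 t2 = (if t1 = t2 then deriv s t1 else (s t2 - s t1) / (t2 - t1))"

definition elliptic_fgl ::
  "complex \<Rightarrow> complex \<Rightarrow> complex \<Rightarrow> complex \<Rightarrow> complex \<Rightarrow> (complex \<Rightarrow> complex) \<Rightarrow> complex \<Rightarrow> complex \<Rightarrow> complex" where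
  "elliptic_fgl m1 m2 m3 m4 m6 s t1 t2 =
     (let lam = chord_slope s t1 t2;
          nu = s t1 - lam * t1;
          t3 = - t1 - t2 - (m1 * lam + m2 * nu + m3 * lam ^ 2 + 2 * m4 * lam * nu + 3 * m6 * lam ^ 2 * nu)
                          / (1 + m2 * lam + m4 * lam ^ 2 + m6 * lam ^ 3);
          s3 = lam * t3 + nu
      in - t3 / (1 - m1 * t3 - m3 * s3))"

definition fgl_exponential ::
  "complex \<Rightarrow> complex \<Rightarrow> complex \<Rightarrow> complex \<Rightarrow> complex \<Rightarrow> (complex \<Rightarrow> complex) \<Rightarrow> real \<Rightarrow> (complex \<Rightarrow> complex) \<Rightarrow> bool" where
  "fgl_exponential m1 m2 m3 m4 m6 s r f \<longleftrightarrow>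
     r > 0 \<and> f holomorphic_on ball 0 r \<and> f 0 = 0 \<and> deriv f 0 = 1 \<and>
     (\<forall>u v. u \<in> ball 0 r \<longrightarrow> v \<in> ball 0 r \<longrightarrow> u + v \<in> ball 0 r \<longrightarrow>
        f (u + v) = elliptic_fgl m1 m2 m3 m4 m6 s (f u) (f v))"

end

theory Submission
  imports Defs
begin

text \<open>Writing the cubic in Weierstrass form x = \<wp> - (4\<mu>2 + \<mu>1^2)/12, 2y = \<wp>' - \<mu>1 x - \<mu>3
  explains the invariants g2, g3, and t(u) = -x/y is the Tate coordinate of the point with
  parameter u.  Both t and the exponential f of F\<mu> solve g' = \<omega>(g), g(0) = 0, where
  \<omega>(t) = \<partial>F\<mu>/\<partial>t2 (t, 0), so that dt/\<omega>(t) is the invariant differential; hence f = t near 0.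
  The addition theorem for \<zeta>, used at v and -v with \<wp>(v) = (4\<mu>2 + \<mu>1^2)/12 and
  \<wp>'(w) = -\<mu>3, turns 1/f = -y/x into \<mu>1/2 + \<zeta>(u) + (1+\<alpha>)/2 \<zeta>(v-u) - (1-\<alpha>)/2 \<zeta>(v+u) - \<alpha> \<zeta>(v),
  the logarithmic derivative of the right-hand side R.  So \<Psi> R has derivative 0 near 0 and
  tends to 1, i.e. 1/\<Psi> = R.\<close>

lemma tendsto_holomorphic_on:
  fixes f :: "complex \<Rightarrow> complex"
  assumes "f holomorphic_on A" "open A" "x \<in> A"
  shows "(f \<longlongrightarrow> f x) (at x)"
  using holomorphic_on_imp_continuous_on[OF assms(1)] assms(2,3)
  by (simp add: continuous_on_eq_continuous_at isCont_def)

lemma DERIV_reflect: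
  fixes f :: "complex \<Rightarrow> complex"
  assumes "(f has_field_derivative D) (at (c - u))"
  shows "((\<lambda>x. f (c - x)) has_field_derivative - D) (at u)"
proof -
  have "((\<lambda>x. c - x) has_field_derivative -1) (at u)" by (auto intro!: derivative_eq_intros)
  from DERIV_chain2[OF assms this] show ?thesis by simp
qed

lemma DERIV_mult_logarithmic:
  fixes a b :: "complex \<Rightarrow> complex"
  assumes "(a has_field_derivative a x * la) (at x)" "(b has_field_derivative b x * lb) (at x)"
  shows "((\<lambda>x. a x * b x) has_field_derivative a x * b x * (la + lb)) (at x)"
  using DERIV_mult[OF assms] by (simp add: algebra_simps)

text \<open>The zeros of a holomorphic function that is not identically zero are isolated,
  so removing them keeps a domain connected.\<close>

lemma connected_nonvanishing_set:
  fixes f :: "complex \<Rightarrow> complex"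
  assumes hol: "f holomorphic_on D" and D: "open D" "connected D" and w: "w \<in> D" "f w \<noteq> 0"
  shows "connected {z\<in>D. f z \<noteq> 0}"
proof -
  have "{z\<in>D. f z = 0} sparse_in D"
    unfolding sparse_in_open[OF D(1)]
  proof
    fix y assume y: "y \<in> D"
    show "\<not> y islimpt {z\<in>D. f z = 0}"
    proof
      assume "y islimpt {z\<in>D. f z = 0}"
      then have "f w = 0"
        by (intro analytic_continuation[OF hol D(1) D(2) _ y _ _ w(1)]) auto
      with w show False by simp
    qed
  qed
  then have "connected (D - {z\<in>D. f z = 0})"
    by (intro sparse_imp_connected[OF _ D(2) D(1)]) simp
  moreover have "D - {z\<in>D. f z = 0} = {z\<in>D. f z \<noteq> 0}" by auto
  ultimately show ?thesis by simp
qed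

lemma open_nonvanishing_set:
  fixes f :: "'a::topological_space \<Rightarrow> complex"
  assumes "continuous_on D f" "open D"
  shows "open {z\<in>D. f z \<noteq> 0}"
proof -
  have "open (D \<inter> f -` (- {0}))"
    by (rule continuous_open_preimage[OF assms]) (simp add: open_Compl)
  moreover have "D \<inter> f -` (- {0}) = {z\<in>D. f z \<noteq> 0}" by auto
  ultimately show ?thesis by simp
qed

lemma eventually_eq_limit_if_deriv_zero:
  fixes Q :: "complex \<Rightarrow> complex"
  assumes deriv: "eventually (\<lambda>u. (Q has_field_derivative 0) (at u)) (at a)"
    and lim: "(Q \<longlongrightarrow> c) (at a)"
  shows "eventually (\<lambda>u. Q u = c) (at a)"
proof -
  obtain d where d: "d > 0" and dQ: "\<And>u. u \<in> ball a d - {a} \<Longrightarrow> (Q has_field_derivative 0) (at u)"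
    using deriv unfolding eventually_at by (auto simp: dist_commute)
  have cont: "continuous_on (ball a d - {a}) Q"
  proof (rule continuous_at_imp_continuous_on, rule ballI)
    fix u assume "u \<in> ball a d - {a}"
    from dQ[OF this] show "isCont Q u" by (rule DERIV_isCont)
  qed
  have "connected (ball a d - {a})" by (rule connected_punctured_ball) simp
  then obtain k where k: "\<And>u. u \<in> ball a d - {a} \<Longrightarrow> Q u = k"
    using DERIV_zero_connected_constant[OF _ _ finite.emptyI cont] dQ by (auto simp: open_Diff)
  have ev: "eventually (\<lambda>u. Q u = k) (at a)"
    using eventually_at_ball'[OF d, of a UNIV] by eventually_elim (simp add: k)
  then have "(Q \<longlongrightarrow> k) (at a)" by (rule tendsto_eventually)
  with lim have "k = c" by (rule tendsto_unique[OF at_neq_bot, rotated])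
  with ev show ?thesis by simp
qed

lemma inj_on_deriv_near_one:
  fixes W W' :: "complex \<Rightarrow> complex"
  assumes S: "convex S"
    and W: "\<And>z. z \<in> S \<Longrightarrow> (W has_field_derivative W' z) (at z within S)"
    and near: "\<And>z. z \<in> S \<Longrightarrow> cmod (W' z - 1) \<le> 1/2"
  shows "inj_on W S"
proof (rule inj_onI)
  fix a b assume ab: "a \<in> S" "b \<in> S" "W a = W b"
  have "cmod ((W a - a) - (W b - b)) \<le> 1/2 * cmod (a - b)"
    by (rule field_differentiable_bound[OF S, of "\<lambda>z. W z - z" "\<lambda>z. W' z - 1"])
       (use ab near in \<open>auto intro!: DERIV_diff W DERIV_ident\<close>)
  with ab(3) show "a = b" by (simp add: norm_minus_commute)
qed

lemma holomorphic_near_one: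
  fixes \<omega> :: "complex \<Rightarrow> complex"
  assumes "\<omega> holomorphic_on ball 0 r" "\<omega> 0 = 1" "r > 0" "e > 0"
  obtains \<rho> where "\<rho> > 0" "\<rho> \<le> r" "\<And>z. z \<in> ball 0 \<rho> \<Longrightarrow> cmod (\<omega> z - 1) < e"
proof -
  have "isCont \<omega> 0"
    using tendsto_holomorphic_on[OF assms(1) open_ball] assms(3) by (simp add: isCont_def)
  then obtain d where d: "d > 0" "\<And>z. dist z 0 < d \<Longrightarrow> dist (\<omega> z) (\<omega> 0) < e"
    using assms(4) unfolding continuous_at_eps_delta by blast
  show ?thesis
    by (rule that[of "min d r"]) (use d assms in \<open>auto simp: dist_norm\<close>)
qed

lemma primitive_along_ode_solution:
  fixes \<omega> W k :: "complex \<Rightarrow> complex"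
  assumes W: "\<And>z. z \<in> ball 0 \<rho> \<Longrightarrow> (W has_field_derivative 1 / \<omega> z) (at z)"
    and \<omega>: "\<And>z. z \<in> ball 0 \<rho> \<Longrightarrow> \<omega> z \<noteq> 0" and \<rho>: "\<rho> > 0"
    and k: "k 0 = 0" "isCont k 0" "eventually (\<lambda>u. (k has_field_derivative \<omega> (k u)) (at u)) (at 0)"
  shows "eventually (\<lambda>u. k u \<in> ball 0 \<rho> \<and> W (k u) = W 0 + u) (at 0)"
proof -
  have k_lim: "(k \<longlongrightarrow> 0) (at 0)" using k(1,2) by (simp add: isCont_def)
  then have k_ball: "eventually (\<lambda>u. k u \<in> ball 0 \<rho>) (at 0)"
    using \<rho> by (intro topological_tendstoD) auto
  have "eventually (\<lambda>u. ((\<lambda>u. W (k u) - u) has_field_derivative 0) (at u)) (at 0)"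
    using k_ball k(3)
  proof eventually_elim
    case (elim u)
    have "((\<lambda>u. W (k u) - u) has_field_derivative 1 / \<omega> (k u) * \<omega> (k u) - 1) (at u)"
      by (intro DERIV_diff DERIV_chain2[OF W] elim DERIV_ident)
    with \<omega>[OF elim(1)] show ?case by simp
  qed
  moreover have "isCont W 0" using W[of 0] \<rho> by (simp add: DERIV_isCont)
  then have "((\<lambda>u. W (k u) - u) \<longlongrightarrow> W 0 - 0) (at 0)"
    using isCont_tendsto_compose[OF _ k_lim] by (intro tendsto_diff tendsto_ident_at)
  ultimately have "eventually (\<lambda>u. W (k u) - u = W 0 - 0) (at 0)"
    by (rule eventually_eq_limit_if_deriv_zero)
  with k_ball show ?thesis by eventually_elim (simp add: algebra_simps)
qed

text \<open>Uniqueness for the autonomous equation g' = \<omega>(g), g(0) = 0, with \<omega>(0) = 1: a primitive W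
  of 1/\<omega> is injective near 0, and W(g(u)) = W(0) + u.\<close>

lemma autonomous_ode_unique:
  fixes \<omega> g h :: "complex \<Rightarrow> complex"
  assumes \<omega>: "\<omega> holomorphic_on ball 0 r" "\<omega> 0 = 1" "r > 0"
    and g: "g 0 = 0" "isCont g 0" "eventually (\<lambda>u. (g has_field_derivative \<omega> (g u)) (at u)) (at 0)"
    and h: "h 0 = 0" "isCont h 0" "eventually (\<lambda>u. (h has_field_derivative \<omega> (h u)) (at u)) (at 0)"
  shows "eventually (\<lambda>u. g u = h u) (at 0)"
proof -
  obtain \<rho> where \<rho>: "\<rho> > 0" "\<rho> \<le> r" and near: "\<And>z. z \<in> ball 0 \<rho> \<Longrightarrow> cmod (\<omega> z - 1) < 1/3"
    using holomorphic_near_one[OF \<omega>, of "1/3"] by auto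
  have \<omega>_ge: "cmod (\<omega> z) \<ge> 2/3" if "z \<in> ball 0 \<rho>" for z
    using norm_triangle_sub[of 1 "\<omega> z"] near[OF that] by (simp add: norm_minus_commute)
  then have \<omega>_nz: "\<omega> z \<noteq> 0" if "z \<in> ball 0 \<rho>" for z using that by fastforce
  have "\<omega> holomorphic_on ball 0 \<rho>"
    by (rule holomorphic_on_subset[OF \<omega>(1)]) (use \<rho>(2) in auto)
  then have "(\<lambda>z. 1 / \<omega> z) holomorphic_on ball 0 \<rho>"
    using \<omega>_nz by (auto intro!: holomorphic_intros)
  then obtain W where W: "\<And>z. z \<in> ball 0 \<rho> \<Longrightarrow> (W has_field_derivative 1 / \<omega> z) (at z within ball 0 \<rho>)"
    using holomorphic_convex_primitive'[OF convex_ball open_ball] by blast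
  have W_at: "(W has_field_derivative 1 / \<omega> z) (at z)" if "z \<in> ball 0 \<rho>" for z
    using W[OF that] at_within_open[OF that open_ball] by simp
  have inj: "inj_on W (ball 0 \<rho>)"
  proof (rule inj_on_deriv_near_one[OF convex_ball W])
    fix z :: complex assume z: "z \<in> ball 0 \<rho>"
    have "cmod (1 / \<omega> z - 1) = cmod (1 - \<omega> z) / cmod (\<omega> z)"
      using \<omega>_nz[OF z] by (simp add: field_simps norm_divide)
    also have "\<dots> \<le> (1/3) / (2/3)"
      using near[OF z] \<omega>_ge[OF z] by (intro frac_le) (auto simp: norm_minus_commute)
    finally show "cmod (1 / \<omega> z - 1) \<le> 1/2" by simp
  qed
  have "eventually (\<lambda>u. k u \<in> ball 0 \<rho> \<and> W (k u) = W 0 + u) (at 0)"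
    if "k 0 = 0" "isCont k 0" "eventually (\<lambda>u. (k has_field_derivative \<omega> (k u)) (at u)) (at 0)" for k
    by (rule primitive_along_ode_solution[OF _ _ \<rho>(1) that]) (use W_at \<omega>_nz in auto)
  from this[OF g] this[OF h] show ?thesis
    by eventually_elim (metis inj inj_onD)
qed

section \<open>Weierstrass functions\<close>

lemma deriv_laurent_tail:
  fixes F h :: "complex \<Rightarrow> complex" and c u :: complex
  assumes h: "h holomorphic_on ball 0 r"
    and F: "\<And>u. u \<in> ball 0 r \<Longrightarrow> u \<noteq> 0 \<Longrightarrow> F u = c / u ^ Suc k + u ^ Suc j * h u"
    and u: "u \<in> ball 0 r" "u \<noteq> 0"
  shows "deriv F u = - (of_nat (Suc k) * c) / u ^ Suc (Suc k)
                     + u ^ j * (of_nat (Suc j) * h u + u * deriv h u)"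
proof -
  have h': "(h has_field_derivative deriv h u) (at u)"
    using holomorphic_derivI[OF h open_ball u(1), of UNIV] by simp
  have pow: "((\<lambda>x. x ^ Suc j) has_field_derivative of_nat (Suc j) * u ^ j) (at u)"
    by (rule DERIV_cong[OF DERIV_power[OF DERIV_ident]]) simp
  have pow': "((\<lambda>x. x ^ Suc k) has_field_derivative of_nat (Suc k) * u ^ k) (at u)"
    by (rule DERIV_cong[OF DERIV_power[OF DERIV_ident]]) simp
  have "((\<lambda>x. c / x ^ Suc k) has_field_derivative
          (0 * u ^ Suc k - c * (of_nat (Suc k) * u ^ k)) / (u ^ Suc k * u ^ Suc k)) (at u)"
    using DERIV_divide[OF DERIV_const pow'] u(2) by simp
  moreover have "(0 * u ^ Suc k - c * (of_nat (Suc k) * u ^ k)) / (u ^ Suc k * u ^ Suc k)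
      = - (of_nat (Suc k) * c) / u ^ Suc (Suc k)"
  proof -
    have "u ^ Suc k * u ^ Suc k = u ^ Suc (Suc k) * u ^ k" by (simp add: algebra_simps)
    then show ?thesis using u(2) by (simp add: field_simps)
  qed
  ultimately have "((\<lambda>x. c / x ^ Suc k) has_field_derivative - (of_nat (Suc k) * c) / u ^ Suc (Suc k)) (at u)"
    by simp
  from DERIV_add[OF this DERIV_mult[OF pow h']]
  have "((\<lambda>x. c / x ^ Suc k + x ^ Suc j * h x) has_field_derivative
          - (of_nat (Suc k) * c) / u ^ Suc (Suc k) + u ^ j * (of_nat (Suc j) * h u + u * deriv h u)) (at u)"
    by (rule DERIV_cong) (simp add: algebra_simps)
  then have "(F has_field_derivative
          - (of_nat (Suc k) * c) / u ^ Suc (Suc k) + u ^ j * (of_nat (Suc j) * h u + u * deriv h u)) (at u)"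
    by (rule has_field_derivative_transform_within_open[of _ _ _ "ball 0 r - {0}"])
       (use u F in \<open>auto simp: open_Diff\<close>)
  then show ?thesis by (rule DERIV_imp_deriv)
qed

locale weierstrass =
  fixes g2 g3 :: complex and \<sigma> :: "complex \<Rightarrow> complex"
  assumes sigma: "is_weierstrass_sigma g2 g3 \<sigma>"
begin

abbreviation "\<zeta> \<equiv> wzeta \<sigma>"
abbreviation "\<P> \<equiv> wp \<sigma>"
abbreviation "\<P>' \<equiv> deriv (wp \<sigma>)"
abbreviation "\<P>'' \<equiv> deriv (deriv (wp \<sigma>))"

definition regular :: "complex set" where "regular = {u. \<sigma> u \<noteq> 0}"

lemma sigma_holomorphic: "\<sigma> holomorphic_on A"
  using sigma holomorphic_on_subset unfolding is_weierstrass_sigma_def by blast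

lemma sigma_minus: "\<sigma> (- u) = - \<sigma> u"
  using sigma unfolding is_weierstrass_sigma_def by auto

lemma wp_differential_eq: "u \<in> regular \<Longrightarrow> (\<P>' u) ^ 2 = 4 * (\<P> u) ^ 3 - g2 * \<P> u - g3"
  using sigma unfolding is_weierstrass_sigma_def regular_def by auto

lemma sigma_has_derivative: "(\<sigma> has_field_derivative deriv \<sigma> x) (at x)"
  using holomorphic_derivI[OF sigma_holomorphic open_UNIV, of x UNIV] by simp

lemma isCont_sigma: "isCont \<sigma> x"
  by (rule DERIV_isCont[OF sigma_has_derivative])

lemma open_regular: "open regular"
  unfolding regular_def by (rule open_Collect_neq) (auto intro: continuous_at_imp_continuous_on isCont_sigma)

lemma regular_minus: "u \<in> regular \<Longrightarrow> - u \<in> regular"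
  unfolding regular_def by (simp add: sigma_minus)

lemma zeta_holomorphic: "\<zeta> holomorphic_on regular"
proof -
  have "deriv \<sigma> holomorphic_on regular"
    using holomorphic_deriv[OF sigma_holomorphic open_UNIV] holomorphic_on_subset by blast
  then show ?thesis
    unfolding wzeta_def[abs_def] using open_regular
    by (intro holomorphic_intros sigma_holomorphic) (auto simp: regular_def)
qed

lemma wp_holomorphic: "\<P> holomorphic_on regular"
  unfolding wp_def[abs_def] by (intro holomorphic_intros holomorphic_deriv zeta_holomorphic open_regular)

lemma wp'_holomorphic: "\<P>' holomorphic_on regular"
  by (intro holomorphic_deriv wp_holomorphic open_regular)

lemma wp''_holomorphic: "\<P>'' holomorphic_on regular"
  by (intro holomorphic_deriv wp'_holomorphic open_regular)

lemma zeta_has_derivative: "u \<in> regular \<Longrightarrow> (\<zeta> has_field_derivative - \<P> u) (at u)"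
  using holomorphic_derivI[OF zeta_holomorphic open_regular, of u UNIV] by (simp add: wp_def)

lemma wp_has_derivative: "u \<in> regular \<Longrightarrow> (\<P> has_field_derivative \<P>' u) (at u)"
  using holomorphic_derivI[OF wp_holomorphic open_regular, of u UNIV] by simp

lemma wp'_has_derivative: "u \<in> regular \<Longrightarrow> (\<P>' has_field_derivative \<P>'' u) (at u)"
  using holomorphic_derivI[OF wp'_holomorphic open_regular, of u UNIV] by simp

lemma sigma_expansion: obtains h where "h holomorphic_on UNIV" "\<And>u. \<sigma> u = u + u ^ 5 * h u"
  using sigma unfolding is_weierstrass_sigma_def by blast

lemma zeta_expansion:
  obtains r k where "r > 0" "k holomorphic_on ball 0 r"
    "\<And>u. u \<in> ball 0 r \<Longrightarrow> u \<noteq> 0 \<Longrightarrow> u \<in> regular"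
    "\<And>u. u \<in> ball 0 r \<Longrightarrow> u \<noteq> 0 \<Longrightarrow> \<zeta> u = 1 / u + u ^ 3 * k u"
proof -
  obtain h where h: "h holomorphic_on UNIV" "\<And>u. \<sigma> u = u + u ^ 5 * h u"
    using sigma_expansion by blast
  define e where "e u = 1 + u ^ 4 * h u" for u
  have e_hol: "e holomorphic_on UNIV" unfolding e_def by (intro holomorphic_intros h(1))
  have "continuous (at 0) e"
    using tendsto_holomorphic_on[OF e_hol open_UNIV] by (simp add: isCont_def)
  then obtain r where r: "r > 0" "\<And>u. dist 0 u < r \<Longrightarrow> e u \<noteq> 0"
    using continuous_at_avoid[of 0 e 0] by (auto simp: e_def)
  have e_nz: "e u \<noteq> 0" if "u \<in> ball 0 r" for u using r(2) that by auto
  have sigma_e: "\<sigma> u = u * e u" for u unfolding h(2) e_def by (simp add: algebra_simps power_numeral_reduce)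
  have deriv_sigma: "deriv \<sigma> u = 1 + 5 * u ^ 4 * h u + u ^ 5 * deriv h u" for u
  proof -
    have "\<sigma> = (\<lambda>u. u + u ^ 5 * h u)" using h(2) by (rule ext)
    moreover have "((\<lambda>u. u + u ^ 5 * h u) has_field_derivative 1 + 5 * u ^ 4 * h u + u ^ 5 * deriv h u) (at u)"
      using holomorphic_derivI[OF h(1) open_UNIV, of u UNIV]
      by (auto intro!: derivative_eq_intros simp: algebra_simps)
    ultimately show ?thesis by (simp add: DERIV_imp_deriv)
  qed
  define k where "k u = (4 * h u + u * deriv h u) / e u" for u
  have "k holomorphic_on ball 0 r" unfolding k_def
    using holomorphic_deriv[OF h(1) open_UNIV] holomorphic_on_subset[OF e_hol] e_nz
    by (intro holomorphic_intros holomorphic_on_subset[OF h(1)]) (auto intro: holomorphic_on_subset)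
  moreover have "u \<in> regular" if "u \<in> ball 0 r" "u \<noteq> 0" for u
    using e_nz[OF that(1)] that(2) unfolding regular_def sigma_e by simp
  moreover have "\<zeta> u = 1 / u + u ^ 3 * k u" if "u \<in> ball 0 r" "u \<noteq> 0" for u
    unfolding wzeta_def deriv_sigma sigma_e k_def using e_nz[OF that(1)] that(2)
    by (simp add: field_simps e_def) (simp add: algebra_simps power_numeral_reduce)
  ultimately show ?thesis using that r(1) by blast
qed

lemma laurent_expansions:
  obtains r k m n where "r > 0" "k holomorphic_on ball 0 r" "m holomorphic_on ball 0 r"
    "n holomorphic_on ball 0 r"
    "\<And>u. u \<in> ball 0 r \<Longrightarrow> u \<noteq> 0 \<Longrightarrow> u \<in> regular"
    "\<And>u. u \<in> ball 0 r \<Longrightarrow> u \<noteq> 0 \<Longrightarrow> \<zeta> u = 1 / u + u ^ 3 * k u"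
    "\<And>u. u \<in> ball 0 r \<Longrightarrow> u \<noteq> 0 \<Longrightarrow> \<P> u = 1 / u ^ 2 + u ^ 2 * m u"
    "\<And>u. u \<in> ball 0 r \<Longrightarrow> u \<noteq> 0 \<Longrightarrow> \<P>' u = -2 / u ^ 3 + u * n u"
proof -
  obtain r k where r: "r > 0" and k: "k holomorphic_on ball 0 r"
    and reg: "\<And>u. u \<in> ball 0 r \<Longrightarrow> u \<noteq> 0 \<Longrightarrow> u \<in> regular"
    and zeta: "\<And>u. u \<in> ball 0 r \<Longrightarrow> u \<noteq> 0 \<Longrightarrow> \<zeta> u = 1 / u + u ^ 3 * k u"
    by (rule zeta_expansion) blast
  define m where "m u = - (3 * k u + u * deriv k u)" for u
  have m: "m holomorphic_on ball 0 r"
    unfolding m_def by (intro holomorphic_intros k holomorphic_deriv[OF k open_ball])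
  have wp: "\<P> u = 1 / u ^ 2 + u ^ 2 * m u" if "u \<in> ball 0 r" "u \<noteq> 0" for u
  proof -
    have "deriv \<zeta> u = - (of_nat (Suc 0) * 1) / u ^ Suc (Suc 0) + u ^ 2 * (of_nat (Suc 2) * k u + u * deriv k u)"
      by (rule deriv_laurent_tail[OF k _ that]) (simp add: zeta)
    then show ?thesis by (simp add: wp_def m_def algebra_simps power2_eq_square)
  qed
  define n where "n u = 2 * m u + u * deriv m u" for u
  have n: "n holomorphic_on ball 0 r"
    unfolding n_def by (intro holomorphic_intros m holomorphic_deriv[OF m open_ball])
  have "\<P>' u = -2 / u ^ 3 + u * n u" if "u \<in> ball 0 r" "u \<noteq> 0" for u
  proof -
    have "deriv \<P> u = - (of_nat (Suc 1) * 1) / u ^ Suc (Suc 1) + u ^ 1 * (of_nat (Suc 1) * m u + u * deriv m u)"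
      by (rule deriv_laurent_tail[OF m _ that]) (simp add: wp power2_eq_square)
    then show ?thesis by (simp add: n_def power3_eq_cube)
  qed
  with that r k m n reg zeta wp show ?thesis by blast
qed

end

context weierstrass
begin

lemma deriv_sigma_minus: "deriv \<sigma> (- u) = deriv \<sigma> u"
proof -
  have "((\<lambda>x. - \<sigma> (- x)) has_field_derivative - (- deriv \<sigma> (- u))) (at u)"
    using DERIV_reflect[of \<sigma> _ 0] by (intro derivative_intros) (simp add: sigma_has_derivative)
  moreover have "(\<lambda>x. - \<sigma> (- x)) = \<sigma>" by (simp add: sigma_minus)
  ultimately show ?thesis by (simp add: DERIV_imp_deriv)
qed

lemma zeta_minus: "\<zeta> (- u) = - \<zeta> u"
  by (simp add: wzeta_def deriv_sigma_minus sigma_minus)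

lemma wp_minus: assumes "u \<in> regular" shows "\<P> (- u) = \<P> u"
proof -
  have "((\<lambda>x. \<zeta> (0 - x)) has_field_derivative - (- \<P> (- u))) (at u)"
    by (rule DERIV_reflect) (simp add: zeta_has_derivative regular_minus assms)
  then have "((\<lambda>x. - \<zeta> (- x)) has_field_derivative - (- (- \<P> (- u)))) (at u)"
    using DERIV_minus by fastforce
  moreover have "(\<lambda>x. - \<zeta> (- x)) = \<zeta>" by (simp add: zeta_minus)
  ultimately show ?thesis by (simp add: DERIV_imp_deriv wp_def)
qed

lemma wp'_minus: assumes "u \<in> regular" shows "\<P>' (- u) = - \<P>' u"
proof -
  have "((\<lambda>x. \<P> (- x)) has_field_derivative - \<P>' (- u)) (at u)"
    using DERIV_reflect[of \<P> _ 0] by (simp add: wp_has_derivative regular_minus assms)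
  then have "(\<P> has_field_derivative - \<P>' (- u)) (at u)"
    by (rule has_field_derivative_transform_within_open[OF _ open_regular assms]) (simp add: wp_minus)
  then show ?thesis by (simp add: DERIV_imp_deriv)
qed

lemma eventually_regular_shift: "c \<in> regular \<Longrightarrow> eventually (\<lambda>u. c + u \<in> regular \<and> c - u \<in> regular) (at 0)"
  using open_regular
  by (intro eventually_conj topological_tendstoD) (auto intro!: tendsto_eq_intros)

lemma tendsto_reflect_regular:
  assumes "h holomorphic_on regular" "c \<in> regular"
  shows "((\<lambda>u. h (c - u)) \<longlongrightarrow> h c) (at 0)"
proof -
  have "isCont h c" using tendsto_holomorphic_on[OF assms(1) open_regular assms(2)] by (simp add: isCont_def)
  moreover have "((\<lambda>u. c - u) \<longlongrightarrow> c) (at 0)" by (auto intro!: tendsto_eq_intros)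
  ultimately show ?thesis by (rule isCont_tendsto_compose)
qed

lemma connected_regular: "connected regular"
proof -
  obtain r where r: "r > 0" "\<And>u. u \<in> ball 0 r \<Longrightarrow> u \<noteq> 0 \<Longrightarrow> u \<in> regular"
    by (rule laurent_expansions) blast
  then have "of_real (r / 2) \<in> regular" by simp
  then have "connected {z\<in>UNIV. \<sigma> z \<noteq> 0}"
    by (intro connected_nonvanishing_set[OF sigma_holomorphic open_UNIV connected_UNIV])
       (auto simp: regular_def)
  then show ?thesis by (simp add: regular_def)
qed

lemma eventually_wp'_nonzero: "eventually (\<lambda>u. u \<in> regular \<and> \<P>' u \<noteq> 0) (at 0)"
proof -
  obtain r n where r: "r > 0" "n holomorphic_on ball 0 r"
    "\<And>u. u \<in> ball 0 r \<Longrightarrow> u \<noteq> 0 \<Longrightarrow> u \<in> regular"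
    "\<And>u. u \<in> ball 0 r \<Longrightarrow> u \<noteq> 0 \<Longrightarrow> \<P>' u = -2 / u ^ 3 + u * n u"
    by (rule laurent_expansions) blast
  have "((\<lambda>u. -2 + u ^ 4 * n u) \<longlongrightarrow> -2 + 0 ^ 4 * n 0) (at 0)"
    using tendsto_holomorphic_on[OF r(2) open_ball, of 0] r(1) by (intro tendsto_intros) auto
  then have "eventually (\<lambda>u. -2 + u ^ 4 * n u \<noteq> 0) (at 0)"
    by (rule tendsto_imp_eventually_ne) simp
  with eventually_at_ball'[OF r(1), of 0 UNIV]
  show ?thesis
  proof eventually_elim
    case (elim u)
    then have "u ^ 3 * \<P>' u = -2 + u ^ 4 * n u"
      using r(4)[of u] by (simp add: field_simps power_numeral_reduce)
    with elim r(3)[of u] show ?case by auto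
  qed
qed

lemma wp''_eq: assumes "u \<in> regular" shows "\<P>'' u = 6 * (\<P> u) ^ 2 - g2 / 2"
proof -
  have factored: "\<P>' z * (2 * \<P>'' z - 12 * (\<P> z) ^ 2 + g2) = 0" if z: "z \<in> regular" for z
  proof -
    have "((\<lambda>x. (\<P>' x) ^ 2 - (4 * (\<P> x) ^ 3 - g2 * \<P> x - g3)) has_field_derivative
            2 * \<P>' z * \<P>'' z - (12 * (\<P> z) ^ 2 * \<P>' z - g2 * \<P>' z)) (at z)"
      by (auto intro!: derivative_eq_intros wp_has_derivative wp'_has_derivative z
               simp: algebra_simps power2_eq_square power3_eq_cube)
    moreover have "((\<lambda>x. (\<P>' x) ^ 2 - (4 * (\<P> x) ^ 3 - g2 * \<P> x - g3)) has_field_derivative 0) (at z)"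
      by (rule has_field_derivative_transform_within_open[OF DERIV_const open_regular z])
         (simp add: wp_differential_eq)
    ultimately have "2 * \<P>' z * \<P>'' z - (12 * (\<P> z) ^ 2 * \<P>' z - g2 * \<P>' z) = 0"
      by (rule DERIV_unique)
    then show ?thesis by (simp add: algebra_simps)
  qed
  define T where "T = {z\<in>regular. \<P>' z \<noteq> 0}"
  have "open T"
    unfolding T_def using holomorphic_on_imp_continuous_on[OF wp'_holomorphic] open_regular
    by (rule open_nonvanishing_set)
  moreover have "T \<noteq> {}"
    using eventually_happens'[OF at_neq_bot eventually_wp'_nonzero] by (auto simp: T_def)
  moreover have "\<P>'' z = 6 * (\<P> z) ^ 2 - g2 / 2" if "z \<in> T" for z
  proof -
    have "2 * \<P>'' z - 12 * (\<P> z) ^ 2 + g2 = 0" using factored[of z] that by (simp add: T_def)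
    then show ?thesis by (simp add: field_simps)
  qed
  ultimately show ?thesis
    by (intro analytic_continuation_open[of T regular, OF _ open_regular _ connected_regular _
          wp''_holomorphic _ _ assms])
       (auto simp: T_def intro!: holomorphic_intros wp_holomorphic)
qed

end

section \<open>The addition theorem for \<zeta>\<close>

lemma wp_chord_identity:
  fixes pu pv qu qv ru rv g2 g3 :: complex
  assumes "qu ^ 2 = 4 * pu ^ 3 - g2 * pu - g3" "qv ^ 2 = 4 * pv ^ 3 - g2 * pv - g3"
    "ru = 6 * pu ^ 2 - g2 / 2" "rv = 6 * pv ^ 2 - g2 / 2" "pu \<noteq> pv"
  shows "- pu + pv + ((ru + rv) * (pu - pv) - (qu - qv) * (qu + qv)) / (pu - pv) ^ 2 / 2 = 0"
proof -
  have "(qu - qv) * (qu + qv) = qu ^ 2 - qv ^ 2" by (simp add: algebra_simps power2_eq_square)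
  also have "\<dots> = 4 * pu ^ 3 - g2 * pu - 4 * pv ^ 3 + g2 * pv" using assms(1,2) by simp
  finally have "(qu - qv) * (qu + qv) = 4 * pu ^ 3 - g2 * pu - 4 * pv ^ 3 + g2 * pv" .
  then have "(ru + rv) * (pu - pv) - (qu - qv) * (qu + qv) = 2 * (pu - pv) ^ 3"
    unfolding assms(3,4) by (simp add: algebra_simps power2_eq_square power3_eq_cube)
  with assms(5) show ?thesis by (simp add: power2_eq_square power3_eq_cube) (simp add: field_simps)
qed

lemma zeta_chord_laurent_identity:
  fixes u k m n pv qv zv D :: complex
  assumes u: "u \<noteq> 0" and D: "D \<noteq> 0" "D = 1 + u ^ 4 * m - u ^ 2 * pv"
  shows "1 / u + u ^ 3 * k + zv + ((-2 / u ^ 3 + u * n) - qv) / (D / u ^ 2) / 2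
    = u ^ 3 * k + u * (2 * u ^ 2 * m + u ^ 2 * n - 2 * pv - u * qv) / (2 * D) + zv"
proof -
  have e: "2 * D + (-2 + u ^ 4 * n - u ^ 3 * qv) = u ^ 2 * (2 * u ^ 2 * m + u ^ 2 * n - 2 * pv - u * qv)"
    unfolding D(2) by (simp add: algebra_simps power_numeral_reduce)
  have "1 / u + ((-2 / u ^ 3 + u * n) - qv) / (D / u ^ 2) / 2
      = (2 * D + (-2 + u ^ 4 * n - u ^ 3 * qv)) / (2 * u * D)"
    using u D(1) by (simp add: field_simps power_numeral_reduce)
  also have "\<dots> = u * (2 * u ^ 2 * m + u ^ 2 * n - 2 * pv - u * qv) / (2 * D)"
    unfolding e using u D(1) by (simp add: field_simps power_numeral_reduce)
  finally show ?thesis by (simp add: algebra_simps)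
qed

context weierstrass
begin

text \<open>The right-hand side of the addition theorem for \<zeta>(c), with a = u and b = c - u.\<close>

definition zeta_chord :: "complex \<Rightarrow> complex \<Rightarrow> complex" where
  "zeta_chord c u = \<zeta> u + \<zeta> (c - u) + (\<P>' u - \<P>' (c - u)) / (\<P> u - \<P> (c - u)) / 2"

lemma zeta_chord_has_derivative:
  assumes u: "u \<in> regular" "c - u \<in> regular" and ne: "\<P> u \<noteq> \<P> (c - u)"
  shows "(zeta_chord c has_field_derivative 0) (at u)"
proof -
  have "(zeta_chord c has_field_derivative - \<P> u + - (- \<P> (c - u))
      + ((\<P>'' u - - \<P>'' (c - u)) * (\<P> u - \<P> (c - u)) - (\<P>' u - \<P>' (c - u)) * (\<P>' u - - \<P>' (c - u)))
        / ((\<P> u - \<P> (c - u)) * (\<P> u - \<P> (c - u))) / 2) (at u)"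
    unfolding zeta_chord_def[abs_def] using ne
    by (intro DERIV_add DERIV_cdivide DERIV_divide DERIV_diff zeta_has_derivative wp_has_derivative
          wp'_has_derivative DERIV_reflect u) auto
  moreover have "- \<P> u + \<P> (c - u)
      + ((\<P>'' u + \<P>'' (c - u)) * (\<P> u - \<P> (c - u)) - (\<P>' u - \<P>' (c - u)) * (\<P>' u + \<P>' (c - u)))
        / (\<P> u - \<P> (c - u)) ^ 2 / 2 = 0"
    by (rule wp_chord_identity[OF wp_differential_eq[OF u(1)] wp_differential_eq[OF u(2)]
          wp''_eq[OF u(1)] wp''_eq[OF u(2)] ne])
  ultimately show ?thesis by (simp add: power2_eq_square)
qed

lemma zeta_chord_near_0:
  assumes c: "c \<in> regular"
  shows "eventually (\<lambda>u. u \<in> regular \<and> c - u \<in> regular \<and> \<P> u \<noteq> \<P> (c - u)) (at 0)"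
    and "(zeta_chord c \<longlongrightarrow> \<zeta> c) (at 0)"
proof -
  obtain r k m n where r: "r > 0" "k holomorphic_on ball 0 r" "m holomorphic_on ball 0 r"
    "n holomorphic_on ball 0 r"
    "\<And>u. u \<in> ball 0 r \<Longrightarrow> u \<noteq> 0 \<Longrightarrow> u \<in> regular"
    "\<And>u. u \<in> ball 0 r \<Longrightarrow> u \<noteq> 0 \<Longrightarrow> \<zeta> u = 1 / u + u ^ 3 * k u"
    "\<And>u. u \<in> ball 0 r \<Longrightarrow> u \<noteq> 0 \<Longrightarrow> \<P> u = 1 / u ^ 2 + u ^ 2 * m u"
    "\<And>u. u \<in> ball 0 r \<Longrightarrow> u \<noteq> 0 \<Longrightarrow> \<P>' u = -2 / u ^ 3 + u * n u"
    by (rule laurent_expansions) blast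
  have lim: "(h \<longlongrightarrow> h 0) (at 0)" if "h holomorphic_on ball 0 r" for h
    using tendsto_holomorphic_on[OF that open_ball] r(1) by simp
  note shift = tendsto_reflect_regular[OF _ c]
  define D where "D u = 1 + u ^ 4 * m u - u ^ 2 * \<P> (c - u)" for u
  have D: "(D \<longlongrightarrow> 1) (at 0)"
    unfolding D_def[abs_def] using lim[OF r(3)] shift[OF wp_holomorphic]
    by (auto intro!: tendsto_eq_intros)
  then have D_nz: "eventually (\<lambda>u. D u \<noteq> 0) (at 0)" by (rule tendsto_imp_eventually_ne) simp
  have near: "eventually (\<lambda>u. u \<in> regular \<and> c - u \<in> regular \<and> \<P> u \<noteq> \<P> (c - u)
      \<and> zeta_chord c u = u ^ 3 * k u + u * (2 * u ^ 2 * m u + u ^ 2 * n u - 2 * \<P> (c - u) - u * \<P>' (c - u))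
         / (2 * D u) + \<zeta> (c - u)) (at 0)"
    using eventually_at_ball'[OF r(1), of 0 UNIV] D_nz eventually_regular_shift[OF c]
  proof eventually_elim
    case (elim u)
    then have u: "u \<in> ball 0 r" "u \<noteq> 0" by auto
    have diff: "\<P> u - \<P> (c - u) = D u / u ^ 2"
      using u(2) by (simp add: r(7)[OF u] D_def field_simps)
    with elim have "\<P> u \<noteq> \<P> (c - u)" by auto
    moreover have "zeta_chord c u = u ^ 3 * k u
        + u * (2 * u ^ 2 * m u + u ^ 2 * n u - 2 * \<P> (c - u) - u * \<P>' (c - u)) / (2 * D u) + \<zeta> (c - u)"
      unfolding zeta_chord_def diff r(6)[OF u] r(8)[OF u]
      by (rule zeta_chord_laurent_identity) (use elim in \<open>simp_all add: D_def\<close>)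
    ultimately show ?case using elim r(5)[OF u] by simp
  qed
  then show "eventually (\<lambda>u. u \<in> regular \<and> c - u \<in> regular \<and> \<P> u \<noteq> \<P> (c - u)) (at 0)"
    by eventually_elim simp
  have "((\<lambda>u. u ^ 3 * k u + u * (2 * u ^ 2 * m u + u ^ 2 * n u - 2 * \<P> (c - u) - u * \<P>' (c - u))
         / (2 * D u) + \<zeta> (c - u)) \<longlongrightarrow> \<zeta> c) (at 0)"
    using lim[OF r(2)] lim[OF r(3)] lim[OF r(4)] D shift[OF wp_holomorphic] shift[OF wp'_holomorphic]
      shift[OF zeta_holomorphic]
    by (auto intro!: tendsto_eq_intros)
  then show "(zeta_chord c \<longlongrightarrow> \<zeta> c) (at 0)"
    by (rule Lim_transform_eventually) (use near in \<open>eventually_elim, simp\<close>)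
qed

text \<open>zeta_chord c is locally constant where defined, by the differential equation of \<wp>, and
  tends to \<zeta>(c) at the pole u = 0; the set where it is defined is connected.\<close>

theorem zeta_addition:
  assumes a: "a \<in> regular" and b: "b \<in> regular" and ab: "a + b \<in> regular" and ne: "\<P> a \<noteq> \<P> b"
  shows "\<zeta> (a + b) = \<zeta> a + \<zeta> b + (\<P>' a - \<P>' b) / (\<P> a - \<P> b) / 2"
proof -
  define c where "c = a + b"
  have c: "c \<in> regular" using ab by (simp add: c_def)
  define U where "U = {u\<in>UNIV. \<sigma> u * \<sigma> (c - u) \<noteq> 0}"
  have U_regular: "u \<in> regular" "c - u \<in> regular" if "u \<in> U" for u
    using that by (auto simp: U_def regular_def)
  have prod_hol: "(\<lambda>u. \<sigma> u * \<sigma> (c - u)) holomorphic_on UNIV"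
    unfolding holomorphic_on_open[OF open_UNIV]
    using DERIV_mult[OF sigma_has_derivative DERIV_reflect[OF sigma_has_derivative]] by blast
  have a_nz: "\<sigma> a * \<sigma> (c - a) \<noteq> 0" using a b by (simp add: c_def regular_def)
  then have a_U: "a \<in> U" by (simp add: U_def)
  have U: "connected U" "open U"
    using connected_nonvanishing_set[OF prod_hol open_UNIV connected_UNIV UNIV_I a_nz]
      open_nonvanishing_set[OF holomorphic_on_imp_continuous_on[OF prod_hol] open_UNIV]
    by (auto simp: U_def)
  define T where "T = {u\<in>U. \<P> u - \<P> (c - u) \<noteq> 0}"
  have diff_hol: "(\<lambda>u. \<P> u - \<P> (c - u)) holomorphic_on U"
    unfolding holomorphic_on_open[OF U(2)]
    using DERIV_diff[OF wp_has_derivative DERIV_reflect[OF wp_has_derivative]] U_regular by blast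
  have a_T: "a \<in> T" using a_U ne by (simp add: T_def c_def)
  have T: "connected T" "open T"
    using connected_nonvanishing_set[OF diff_hol U(2) U(1) a_U] a_T
      open_nonvanishing_set[OF holomorphic_on_imp_continuous_on[OF diff_hol] U(2)]
    by (auto simp: T_def)
  have T_deriv: "(zeta_chord c has_field_derivative 0) (at u)" if "u \<in> T" for u
    using that by (intro zeta_chord_has_derivative) (auto simp: T_def U_regular)
  obtain K where K: "\<And>u. u \<in> T \<Longrightarrow> zeta_chord c u = K"
    using DERIV_zero_connected_constant[OF T finite.emptyI, of "zeta_chord c"] T_deriv
    by (metis DERIV_isCont Diff_empty continuous_at_imp_continuous_on)
  have "eventually (\<lambda>u. u \<in> T) (at 0)"
    using zeta_chord_near_0(1)[OF c] by eventually_elim (auto simp: T_def U_def regular_def)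
  then have "(zeta_chord c \<longlongrightarrow> K) (at 0)"
    by (intro tendsto_eventually) (auto elim!: eventually_mono simp: K)
  then have "K = \<zeta> c" using zeta_chord_near_0(2)[OF c] by (rule tendsto_unique[OF at_neq_bot])
  then show ?thesis using K[OF a_T] by (simp add: zeta_chord_def c_def)
qed

end

section \<open>The Tate curve and its formal group law\<close>

lemma fgl_derivative_identity_reduced:
  fixes m1 m2 m3 m4 m6 t L D0 t30 t31 E0 J :: complex
  assumes t: "t \<noteq> 0" and D0n: "D0 \<noteq> 0" and Ln: "L \<noteq> 0"
    and D0: "D0 = 1 + m2 * L + m4 * L^2 + m6 * L^3"
    and R: "L = t^2 * D0 + t * (m1 * L + m3 * L^2)"
    and t30: "t30 = - L / (t * D0)"
    and t31: "t31 = -1 - (L/t) * (m1 + 2*m3*L) / D0 + L^2 * (m2 + 2*m4*L + 3*m6*L^2) / (t^2 * D0^2)"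
    and E0: "E0 = L / (t^2 * D0)"
    and J: "J = t31 + m3 * L * t30 * (t30 / t - 1)"
  shows "- J / E0^2 = 1 - m1 * t - m2 * t^2 - 2 * m3 * (L*t) - 2 * m4 * t * (L*t) - 3 * m6 * (L*t)^2"
proof -
  define a where "a = 1 - m1*t - m3*t*L"
  have tD: "t^2 * D0 = L * a" using R unfolding a_def by (simp add: algebra_simps power2_eq_square)
  have p1: "t31 * (t^4 * D0^2) = - (t^4*D0^2) - t^3*L*(m1+2*m3*L)*D0 + t^2*L^2*(m2 + 2*m4*L + 3*m6*L^2)"
  proof -
    have a1: "(L/t) * (m1 + 2*m3*L) / D0 * (t^4 * D0^2) = t^3*L*(m1+2*m3*L)*D0"
      using t D0n by (simp add: field_simps power2_eq_square power3_eq_cube power4_eq_xxxx)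
    have a2: "L^2 * (m2 + 2*m4*L + 3*m6*L^2) / (t^2 * D0^2) * (t^4 * D0^2) = t^2*L^2*(m2 + 2*m4*L + 3*m6*L^2)"
      using t D0n by (simp add: field_simps power2_eq_square power3_eq_cube power4_eq_xxxx)
    have "t31 * (t^4 * D0^2) = - (t^4 * D0^2) - (L/t) * (m1 + 2*m3*L) / D0 * (t^4 * D0^2)
         + L^2 * (m2 + 2*m4*L + 3*m6*L^2) / (t^2 * D0^2) * (t^4 * D0^2)"
      unfolding t31 by (simp only: ring_distribs) simp
    then show ?thesis unfolding a1 a2 .
  qed
  have p2: "(m3 * L * t30 * (t30 / t - 1)) * (t^4 * D0^2) = m3*L^2*t*(L + t^2*D0)"
    unfolding t30 using t D0n by (simp add: field_simps power2_eq_square power3_eq_cube power4_eq_xxxx)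
  have "J * t^4 * D0^2 = - (t^4*D0^2) - t^3*L*(m1+2*m3*L)*D0 + t^2*L^2*(m2 + 2*m4*L + 3*m6*L^2)
        + m3*L^2*t*(L + t^2*D0)"
    unfolding J using p1 p2 by (simp add: algebra_simps)
  also have "\<dots> = L^2 * (-(a^2) - t*(m1+2*m3*L)*a + t^2*(m2 + 2*m4*L + 3*m6*L^2) + m3*t*L*(1 + a))"
  proof -
    have e1': "t^4*D0^2 = (t^2*D0)^2" by (simp add: power2_eq_square power4_eq_xxxx algebra_simps)
    have e1: "t^4*D0^2 = L^2 * a^2" unfolding e1' tD by (simp add: power_mult_distrib)
    have e2': "t^3*L*(m1+2*m3*L)*D0 = t*L*(m1+2*m3*L)*(t^2*D0)" by (simp add: power2_eq_square power3_eq_cube algebra_simps)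
    have e2: "t^3*L*(m1+2*m3*L)*D0 = L^2 * t * (m1+2*m3*L) * a" unfolding e2' tD by (simp add: power2_eq_square algebra_simps)
    have e3: "m3*L^2*t*(L + t^2*D0) = L^2 * m3*t*L*(1+a)" using tD by (simp add: algebra_simps power2_eq_square)
    show ?thesis unfolding e1 e2 e3 by (simp add: algebra_simps)
  qed
  also have "\<dots> = -(L^2) * (1 - m1 * t - m2 * t^2 - 2 * m3 * (L*t) - 2 * m4 * t * (L*t) - 3 * m6 * (L*t)^2)"
    unfolding a_def by (simp add: algebra_simps power2_eq_square)
  finally have "J * t^4 * D0^2 = -(L^2) * (1 - m1 * t - m2 * t^2 - 2 * m3 * (L*t) - 2 * m4 * t * (L*t) - 3 * m6 * (L*t)^2)" .
  then show ?thesis unfolding E0 using t D0n Ln by (simp add: field_simps)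
qed

text \<open>Along the chord through O and (t, s) the third intersection point moves with value and
  derivative t30, t31 (t-coordinate) and L t30, s31 (s-coordinate); E0, E1 are those of the
  denominator 1 - m1 t3 - m3 s3 of the negation map; the left-hand side is \<partial>F/\<partial>t2 (t, 0).\<close>

lemma fgl_derivative_identity:
  fixes m1 m2 m3 m4 m6 t s L N0 N1 D0 D1 t30 t31 s31 E0 E1 :: complex
  assumes rel: "s = t ^ 3 + m1 * t * s + m2 * t ^ 2 * s + m3 * s ^ 2 + m4 * t * s ^ 2 + m6 * s ^ 3"
    and t: "t \<noteq> 0" and D0n: "D0 \<noteq> 0" and E0n: "E0 \<noteq> 0"
    and L: "L = s / t"
    and N0: "N0 = m1 * L + m3 * L^2"
    and N1: "N1 = m1 * (L/t) + m2 * (-L) + 2 * m3 * L * (L/t) + 2 * m4 * L * (-L) + 3 * m6 * L^2 * (-L)"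
    and D0: "D0 = 1 + m2 * L + m4 * L^2 + m6 * L^3"
    and D1: "D1 = m2 * (L/t) + 2 * m4 * L * (L/t) + 3 * m6 * L^2 * (L/t)"
    and t30: "t30 = -t - N0 / D0"
    and t31: "t31 = -1 - (N1 * D0 - N0 * D1) / (D0 * D0)"
    and s31: "s31 = (L/t) * t30 + L * t31 + (-L)"
    and E0: "E0 = 1 - m1 * t30 - m3 * (L * t30)"
    and E1: "E1 = - m1 * t31 - m3 * s31"
  shows "- (t31 * E0 - t30 * E1) / (E0 * E0) = 1 - m1 * t - m2 * t^2 - 2 * m3 * s - 2 * m4 * t * s - 3 * m6 * s^2"
proof -
  have sL: "s = L * t" using t unfolding L by simp
  have R: "L = t^2 * D0 + t * (m1 * L + m3 * L^2)"
  proof -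
    have "L * t = t * (t^2 * D0 + t * (m1 * L + m3 * L^2))" using rel unfolding sL D0
      by (simp add: algebra_simps power2_eq_square power3_eq_cube)
    then show ?thesis using t by (simp add: mult.commute)
  qed
  have t30': "t30 = - L / (t * D0)"
    unfolding t30 N0 using t D0n by (subst R) (simp add: field_simps power2_eq_square)
  have E0': "E0 = L / (t^2 * D0)"
    unfolding E0 t30' using t D0n by (subst (3) R) (simp add: field_simps power2_eq_square)
  have Ln: "L \<noteq> 0" using E0n E0' by auto
  define Dl where "Dl = m2 + 2*m4*L + 3*m6*L^2"
  have N1': "N1 = (L/t) * (m1 + 2*m3*L) - L * Dl" unfolding N1 Dl_def by (simp add: algebra_simps power2_eq_square)
  have D1': "D1 = (L/t) * Dl" unfolding D1 Dl_def by (simp add: algebra_simps power2_eq_square)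
  have DN: "D0 + N0 / t = L / t^2"
  proof -
    have "L / t^2 = (t^2 * D0 + t * N0) / t^2" unfolding N0 by (subst R) simp
    also have "\<dots> = D0 + N0 / t" using t by (simp add: field_simps power2_eq_square)
    finally show ?thesis by simp
  qed
  have "N1 * D0 - N0 * D1 = (L/t) * (m1 + 2*m3*L) * D0 - L * Dl * (D0 + N0 / t)"
    unfolding N1' D1' by (simp add: algebra_simps)
  also have "\<dots> = (L/t) * (m1 + 2*m3*L) * D0 - L^2 * Dl / t^2" unfolding DN by (simp add: power2_eq_square)
  finally have ND: "N1 * D0 - N0 * D1 = (L/t) * (m1 + 2*m3*L) * D0 - L^2 * Dl / t^2" .
  have t31': "t31 = -1 - (L/t) * (m1 + 2*m3*L) / D0 + L^2 * (m2 + 2*m4*L + 3*m6*L^2) / (t^2 * D0^2)"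
  proof -
    have "(N1 * D0 - N0 * D1) / (D0 * D0) = (L/t) * (m1 + 2*m3*L) / D0 - L^2 * Dl / (t^2 * D0^2)"
      unfolding ND using D0n t by (simp add: field_simps power2_eq_square)
    then show ?thesis unfolding t31 Dl_def by simp
  qed
  define J where "J = t31 + m3 * L * t30 * (t30 / t - 1)"
  have JJ: "t31 * E0 - t30 * E1 = J"
    unfolding J_def E0 E1 s31 using t by (simp add: field_simps power2_eq_square)
  have "- J / E0^2 = 1 - m1 * t - m2 * t^2 - 2 * m3 * (L*t) - 2 * m4 * t * (L*t) - 3 * m6 * (L*t)^2"
    by (rule fgl_derivative_identity_reduced[OF t D0n Ln D0 R t30' t31' E0' J_def])
  then show ?thesis unfolding JJ sL by (simp add: power2_eq_square)
qed

lemma DERIV_tate_negation: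
  fixes t3 s3 :: "complex \<Rightarrow> complex"
  assumes t3: "(t3 has_field_derivative t31) (at x)" and s3: "(s3 has_field_derivative s31) (at x)"
    and E0: "1 - m1 * t3 x - m3 * s3 x \<noteq> 0"
  shows "((\<lambda>y. - t3 y / (1 - m1 * t3 y - m3 * s3 y)) has_field_derivative
           - (t31 * (1 - m1 * t3 x - m3 * s3 x) - t3 x * (- m1 * t31 - m3 * s31))
             / (1 - m1 * t3 x - m3 * s3 x) ^ 2) (at x)"
proof -
  have "((\<lambda>y. 1 - m1 * t3 y - m3 * s3 y) has_field_derivative 0 - m1 * t31 - m3 * s31) (at x)"
    by (intro DERIV_diff DERIV_const DERIV_cmult t3 s3)
  from DERIV_divide[OF DERIV_minus[OF t3] this E0] show ?thesis
    by (rule DERIV_cong) (simp add: power2_eq_square algebra_simps)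
qed

locale tate_curve =
  fixes m1 m2 m3 m4 m6 :: complex and s :: "complex \<Rightarrow> complex" and rs :: real
  assumes tate: "tate_s m1 m2 m3 m4 m6 rs s"
begin

lemma rs_pos: "rs > 0" and s_holomorphic: "s holomorphic_on ball 0 rs" and s_0: "s 0 = 0"
  and s_tate_eq: "\<And>t. t \<in> ball 0 rs \<Longrightarrow> tate_eq m1 m2 m3 m4 m6 t (s t)"
  using tate unfolding tate_s_def by auto

lemma s_has_derivative: "t \<in> ball 0 rs \<Longrightarrow> (s has_field_derivative deriv s t) (at t)"
  using holomorphic_derivI[OF s_holomorphic open_ball, of t UNIV] by simp

lemma isCont_s_0: "isCont s 0"
  using s_has_derivative[of 0] rs_pos by (simp add: DERIV_isCont)

text \<open>The Tate equation reads s(t) B(t) = t^3 with B(0) = 1.\<close>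

lemma deriv_s_0: "deriv s 0 = 0"
proof -
  define B where "B t = 1 - m1 * t - m2 * t ^ 2 - m3 * s t - m4 * t * s t - m6 * (s t) ^ 2" for t
  have sB: "s t * B t = t ^ 3" if "t \<in> ball 0 rs" for t
    using s_tate_eq[OF that] unfolding tate_eq_def B_def
    by (simp add: algebra_simps power2_eq_square power3_eq_cube)
  have 0: "(0::complex) \<in> ball 0 rs" using rs_pos by simp
  have "B holomorphic_on ball 0 rs" unfolding B_def[abs_def] by (intro holomorphic_intros s_holomorphic)
  then have "(B has_field_derivative deriv B 0) (at 0)"
    using holomorphic_derivI[OF _ open_ball 0, of B UNIV] by simp
  from DERIV_mult[OF s_has_derivative[OF 0] this]
  have "((\<lambda>t. s t * B t) has_field_derivative deriv s 0 * B 0 + deriv B 0 * s 0) (at 0)" .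
  moreover have "((\<lambda>t. s t * B t) has_field_derivative 3 * 0 ^ 2) (at 0)"
  proof -
    have "((\<lambda>t::complex. t ^ 3) has_field_derivative 3 * 0 ^ 2) (at 0)" by (auto intro!: derivative_eq_intros)
    then show ?thesis by (rule has_field_derivative_transform_within_open[OF _ open_ball 0]) (simp add: sB)
  qed
  ultimately have "deriv s 0 * B 0 + deriv B 0 * s 0 = 3 * 0 ^ 2" by (rule DERIV_unique)
  then show ?thesis by (simp add: B_def s_0)
qed

text \<open>inv_diff t = \<partial>F/\<partial>t2 (t, 0), so dt / inv_diff t is the invariant differential.\<close>

definition inv_diff :: "complex \<Rightarrow> complex" where
  "inv_diff t = 1 - m1 * t - m2 * t ^ 2 - 2 * m3 * s t - 2 * m4 * t * s t - 3 * m6 * (s t) ^ 2"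

lemma inv_diff_holomorphic: "inv_diff holomorphic_on ball 0 rs"
  unfolding inv_diff_def[abs_def] by (intro holomorphic_intros s_holomorphic)

lemma inv_diff_0: "inv_diff 0 = 1"
  by (simp add: inv_diff_def s_0)

lemma chord_slope_at_0:
  assumes t: "t \<in> ball 0 rs" "t \<noteq> 0"
  shows "chord_slope s t 0 = s t / t"
    and "(chord_slope s t has_field_derivative s t / t ^ 2) (at 0)"
proof -
  show "chord_slope s t 0 = s t / t" using t(2) by (simp add: chord_slope_def s_0)
  have 0: "(0::complex) \<in> ball 0 rs" using rs_pos by simp
  have "((\<lambda>x. (s x - s t) / (x - t)) has_field_derivative
      ((deriv s 0 - 0) * (0 - t) - (s 0 - s t) * (1 - 0)) / ((0 - t) * (0 - t))) (at 0)"
    using t(2) by (intro DERIV_divide DERIV_diff s_has_derivative[OF 0] DERIV_const DERIV_ident) auto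
  then have "((\<lambda>x. (s x - s t) / (x - t)) has_field_derivative s t / t ^ 2) (at 0)"
    by (simp add: deriv_s_0 s_0 power2_eq_square)
  then show "(chord_slope s t has_field_derivative s t / t ^ 2) (at 0)"
    by (rule has_field_derivative_transform_within_open[of _ _ _ "- {t}"])
       (use t(2) in \<open>auto simp: chord_slope_def open_Compl\<close>)
qed

lemma elliptic_fgl_has_derivative_at_0:
  fixes t :: complex
  defines "L \<equiv> s t / t"
  defines "D0 \<equiv> 1 + m2 * L + m4 * L ^ 2 + m6 * L ^ 3"
  defines "t30 \<equiv> - t - (m1 * L + m3 * L ^ 2) / D0"
  assumes t: "t \<in> ball 0 rs" "t \<noteq> 0" and D0: "D0 \<noteq> 0"
    and E0: "1 - m1 * t30 - m3 * (L * t30) \<noteq> 0"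
  shows "(elliptic_fgl m1 m2 m3 m4 m6 s t has_field_derivative inv_diff t) (at 0)"
proof -
  define lam where "lam = chord_slope s t"
  define nu where "nu x = s t - lam x * t" for x
  define N where "N x = m1 * lam x + m2 * nu x + m3 * (lam x) ^ 2 + 2 * m4 * lam x * nu x
    + 3 * m6 * (lam x) ^ 2 * nu x" for x
  define Dn where "Dn x = 1 + m2 * lam x + m4 * (lam x) ^ 2 + m6 * (lam x) ^ 3" for x
  define t3 where "t3 x = - t - x - N x / Dn x" for x
  define s3 where "s3 x = lam x * t3 x + nu x" for x
  have fgl: "elliptic_fgl m1 m2 m3 m4 m6 s t = (\<lambda>x. - t3 x / (1 - m1 * t3 x - m3 * s3 x))"
    unfolding elliptic_fgl_def Let_def t3_def[abs_def] s3_def[abs_def] N_def[abs_def] Dn_def[abs_def]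
      nu_def[abs_def] lam_def ..
  have lam0: "lam 0 = L" and dlam: "(lam has_field_derivative L / t) (at 0)"
    using chord_slope_at_0[OF t] by (simp_all add: lam_def L_def power2_eq_square)
  have nu0: "nu 0 = 0" using t(2) by (simp add: nu_def lam0 L_def)
  have dnu: "(nu has_field_derivative - L) (at 0)"
    using DERIV_diff[OF DERIV_const DERIV_cmult_right[OF dlam, of t]] t(2) by (simp add: nu_def[abs_def])
  define N1 where "N1 = m1 * (L/t) + m2 * (-L) + 2 * m3 * L * (L/t) + 2 * m4 * L * (-L) + 3 * m6 * L^2 * (-L)"
  define D1 where "D1 = m2 * (L/t) + 2 * m4 * L * (L/t) + 3 * m6 * L^2 * (L/t)"
  define N0 where "N0 = m1 * L + m3 * L^2"
  have dN: "(N has_field_derivative N1) (at 0)"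
    unfolding N_def[abs_def] N1_def
    by (rule derivative_eq_intros refl dlam dnu | simp add: lam0 nu0)+ (simp add: algebra_simps power2_eq_square)
  have dD: "(Dn has_field_derivative D1) (at 0)"
    unfolding Dn_def[abs_def] D1_def
    by (rule derivative_eq_intros refl dlam | simp add: lam0)+ (simp add: algebra_simps power2_eq_square)
  have N0': "N 0 = N0" and D0': "Dn 0 = D0" by (simp_all add: N_def N0_def Dn_def D0_def lam0 nu0)
  define t31 where "t31 = -1 - (N1 * D0 - N0 * D1) / (D0 * D0)"
  have t30': "t3 0 = t30" by (simp add: t3_def t30_def N0' D0' N0_def)
  have dt3: "(t3 has_field_derivative t31) (at 0)"
    using DERIV_diff[OF DERIV_diff[OF DERIV_const DERIV_ident] DERIV_divide[OF dN dD]] D0 D0'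
    by (simp add: t3_def[abs_def] t31_def N0')
  define s31 where "s31 = (L/t) * t30 + L * t31 + (-L)"
  have s30': "s3 0 = L * t30" by (simp add: s3_def lam0 nu0 t30')
  have ds3: "(s3 has_field_derivative s31) (at 0)"
    using DERIV_add[OF DERIV_mult'[OF dlam dt3] dnu]
    by (simp add: s3_def[abs_def] s31_def lam0 t30' algebra_simps)
  define E0 where "E0 = 1 - m1 * t30 - m3 * (L * t30)"
  define E1 where "E1 = - m1 * t31 - m3 * s31"
  have "(elliptic_fgl m1 m2 m3 m4 m6 s t has_field_derivative - (t31 * E0 - t30 * E1) / (E0 * E0)) (at 0)"
    using DERIV_tate_negation[OF dt3 ds3] E0
    by (simp add: fgl t30' s30' E0_def E1_def power2_eq_square)
  moreover have "- (t31 * E0 - t30 * E1) / (E0 * E0) = inv_diff t"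
  proof -
    have "s t = t ^ 3 + m1 * t * s t + m2 * t ^ 2 * s t + m3 * (s t) ^ 2 + m4 * t * (s t) ^ 2
        + m6 * (s t) ^ 3"
      using s_tate_eq[OF t(1)] by (simp add: tate_eq_def)
    moreover have "E0 \<noteq> 0" using E0 by (simp add: E0_def)
    moreover have "t30 = - t - N0 / D0" by (simp add: t30_def N0_def)
    ultimately show ?thesis
      unfolding inv_diff_def
      using fgl_derivative_identity[OF _ t(2) D0 _ meta_eq_to_obj_eq[OF L_def] N0_def N1_def
          meta_eq_to_obj_eq[OF D0_def] D1_def _ t31_def s31_def E0_def E1_def]
      by blast
  qed
  ultimately show ?thesis by simp
qed

end

context tate_curve
begin

lemma elliptic_fgl_has_derivative_near_0:
  "eventually (\<lambda>t. (elliptic_fgl m1 m2 m3 m4 m6 s t has_field_derivative inv_diff t) (at 0)) (at 0)"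
proof -
  define L where "L t = s t / t" for t
  define D0 where "D0 t = 1 + m2 * L t + m4 * (L t) ^ 2 + m6 * (L t) ^ 3" for t
  define t30 where "t30 t = - t - (m1 * L t + m3 * (L t) ^ 2) / D0 t" for t
  have "(s has_field_derivative 0) (at 0)" using s_has_derivative[of 0] rs_pos deriv_s_0 by simp
  then have L: "(L \<longlongrightarrow> 0) (at 0)" unfolding has_field_derivative_iff L_def[abs_def] s_0 by simp
  have D0: "(D0 \<longlongrightarrow> 1) (at 0)"
    unfolding D0_def[abs_def] by (rule tendsto_eq_intros refl L | simp)+
  have t30: "(t30 \<longlongrightarrow> 0) (at 0)"
    unfolding t30_def[abs_def] by (rule tendsto_eq_intros refl L D0 tendsto_ident_at | simp)+
  have E0: "((\<lambda>t. 1 - m1 * t30 t - m3 * (L t * t30 t)) \<longlongrightarrow> 1) (at 0)"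
    by (rule tendsto_eq_intros refl L t30 | simp)+
  have "eventually (\<lambda>t. D0 t \<noteq> 0) (at 0)" using D0 by (rule tendsto_imp_eventually_ne) simp
  moreover have "eventually (\<lambda>t. 1 - m1 * t30 t - m3 * (L t * t30 t) \<noteq> 0) (at 0)"
    using E0 by (rule tendsto_imp_eventually_ne) simp
  ultimately show ?thesis
    using eventually_at_ball'[OF rs_pos, of 0 UNIV] by eventually_elim (auto intro!: elliptic_fgl_has_derivative_at_0 simp: L_def D0_def t30_def)
qed

end

locale formal_group_exponential = tate_curve +
  fixes f :: "complex \<Rightarrow> complex" and rf :: real
  assumes exponential: "fgl_exponential m1 m2 m3 m4 m6 s rf f"
begin

lemma rf_pos: "rf > 0" and f_holomorphic: "f holomorphic_on ball 0 rf" and f_0: "f 0 = 0"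
  and deriv_f_0: "deriv f 0 = 1"
  and f_add: "\<And>u v. u \<in> ball 0 rf \<Longrightarrow> v \<in> ball 0 rf \<Longrightarrow> u + v \<in> ball 0 rf \<Longrightarrow>
        f (u + v) = elliptic_fgl m1 m2 m3 m4 m6 s (f u) (f v)"
  using exponential unfolding fgl_exponential_def by auto

lemma f_has_derivative: "u \<in> ball 0 rf \<Longrightarrow> (f has_field_derivative deriv f u) (at u)"
  using holomorphic_derivI[OF f_holomorphic open_ball, of u UNIV] by simp

lemma isCont_f_0: "isCont f 0"
  using f_has_derivative[of 0] rf_pos by (simp add: DERIV_isCont)

lemma f_nonzero_near_0: "eventually (\<lambda>u. f u \<noteq> 0) (at 0)"
proof -
  have "(f has_field_derivative 1) (at 0)" using f_has_derivative[of 0] rf_pos deriv_f_0 by simp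
  then have "((\<lambda>y. f y / y) \<longlongrightarrow> 1) (at 0)" unfolding has_field_derivative_iff f_0 by simp
  then have "eventually (\<lambda>y. f y / y \<noteq> 0) (at 0)" by (rule tendsto_imp_eventually_ne) simp
  then show ?thesis by eventually_elim auto
qed

lemma filterlim_f_at_0: "filterlim f (at 0) (at 0)"
  using isCont_f_0 f_nonzero_near_0 by (intro filterlim_atI) (simp_all add: isCont_def f_0)

text \<open>Differentiating f(u + h) = F(f(u), f(h)) in h at h = 0.\<close>

lemma f_ode: "eventually (\<lambda>u. (f has_field_derivative inv_diff (f u)) (at u)) (at 0)"
  using eventually_compose_filterlim[OF elliptic_fgl_has_derivative_near_0 filterlim_f_at_0]
    eventually_at_ball[OF rf_pos, of 0 UNIV]
proof eventually_elim
  case (elim u)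
  then have u: "u \<in> ball 0 rf" by simp
  have "((\<lambda>h. elliptic_fgl m1 m2 m3 m4 m6 s (f u) (f h)) has_field_derivative inv_diff (f u) * 1) (at 0)"
    using elim f_has_derivative[of 0] rf_pos by (intro DERIV_chain2) (simp_all add: f_0 deriv_f_0)
  moreover have "eventually (\<lambda>h. f (u + h) = elliptic_fgl m1 m2 m3 m4 m6 s (f u) (f h)) (nhds 0)"
  proof -
    have "open (ball 0 rf \<inter> (\<lambda>h. u + h) -` ball 0 rf)"
      by (intro open_Int open_ball continuous_open_vimage) (auto intro!: continuous_intros)
    then have "eventually (\<lambda>h. h \<in> ball 0 rf \<inter> (\<lambda>h. u + h) -` ball 0 rf) (nhds 0)"
      by (rule eventually_nhds_in_open) (use rf_pos u in auto)
    then show ?thesis by eventually_elim (use u f_add in auto)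
  qed
  ultimately have "((\<lambda>h. f (u + h)) has_field_derivative inv_diff (f u)) (at 0)"
    by (simp add: DERIV_cong_ev[OF refl _ refl])
  moreover have "((\<lambda>h. f (u + h)) has_field_derivative deriv f u) (at 0)"
    using DERIV_chain2[OF f_has_derivative[of "u + 0"] DERIV_add[OF DERIV_const DERIV_ident]] u by simp
  ultimately have "deriv f u = inv_diff (f u)" by (rule DERIV_unique[rotated])
  then show ?case using f_has_derivative[OF u] by simp
qed

end

section \<open>Uniformization of the Tate curve\<close>

lemma long_weierstrass_eq_of_wp:
  fixes m1 m2 m3 m4 m6 g2 g3 P P' x y :: complex
  assumes g2: "g2 = (4 * m2 + m1 ^ 2) ^ 2 / 12 - 2 * (m1 * m3 + 2 * m4)"
    and g3: "g3 = (m1 * m3 + 2 * m4) * (4 * m2 + m1 ^ 2) / 6 - (4 * m2 + m1 ^ 2) ^ 3 / 216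
               - 4 * m6 - m3 ^ 2"
    and ode: "P' ^ 2 = 4 * P ^ 3 - g2 * P - g3"
    and x: "x = P - (4 * m2 + m1 ^ 2) / 12"
    and y: "2 * y = P' - m1 * x - m3"
  shows "y^2 + m1 * x * y + m3 * y = x^3 + m2 * x^2 + m4 * x + m6"
proof -
  have "P' = 2*y + m1*x + m3" using y by simp
  with ode have "(2*y + m1*x + m3)^2 = 4 * P ^ 3 - g2 * P - g3" by simp
  then show ?thesis unfolding g2 g3 x by (simp add: field_simps) algebra
qed

lemma tate_t_derivative_identity:
  fixes m1 m2 m3 m4 m6 g2 g3 P P' P'' x y :: complex
  assumes g2: "g2 = (4 * m2 + m1 ^ 2) ^ 2 / 12 - 2 * (m1 * m3 + 2 * m4)"
    and g3: "g3 = (m1 * m3 + 2 * m4) * (4 * m2 + m1 ^ 2) / 6 - (4 * m2 + m1 ^ 2) ^ 3 / 216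
               - 4 * m6 - m3 ^ 2"
    and ode: "P' ^ 2 = 4 * P ^ 3 - g2 * P - g3"
    and ode2: "P'' = 6 * P^2 - g2 / 2"
    and x: "x = P - (4 * m2 + m1 ^ 2) / 12"
    and y: "2 * y = P' - m1 * x - m3"
    and yn: "y \<noteq> 0"
  shows "- (P' * y - x * ((P'' - m1 * P') / 2)) / y^2
     = 1 - m1 * (-x/y) - m2 * (-x/y)^2 - 2 * m3 * (-1/y) - 2 * m4 * (-x/y) * (-1/y) - 3 * m6 * (-1/y)^2"
proof -
  have c: "y^2 + m1 * x * y + m3 * y = x^3 + m2 * x^2 + m4 * x + m6"
    using long_weierstrass_eq_of_wp[OF g2 g3 ode x y] .
  have P': "P' = 2*y + m1*x + m3" using y by simp
  have P: "P = x + (4 * m2 + m1 ^ 2) / 12" using x by simp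
  have yd: "(P'' - m1 * P') / 2 = 3*x^2 + 2*m2*x + m4 - m1*y"
    unfolding ode2 P' P g2 by (simp add: field_simps) algebra
  show ?thesis unfolding yd using yn c unfolding P' by (simp add: field_simps) algebra
qed

lemma tate_eq_of_long_weierstrass:
  fixes m1 m2 m3 m4 m6 x y :: complex
  assumes c: "y^2 + m1 * x * y + m3 * y = x^3 + m2 * x^2 + m4 * x + m6" and y: "y \<noteq> 0"
  shows "tate_eq m1 m2 m3 m4 m6 (-x/y) (-1/y)"
proof -
  define iy where "iy = 1 / y"
  have yi: "y * iy = 1" using y unfolding iy_def by simp
  have e1: "-x/y = -x * iy" "-1/y = - iy" unfolding iy_def by simp_all
  have "- iy = (-x * iy)^3 + m1 * (-x * iy) * (- iy) + m2 * (-x * iy)^2 * (- iy) + m3 * (- iy)^2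
      + m4 * (-x * iy) * (- iy)^2 + m6 * (- iy)^3"
    using c yi by algebra
  then show ?thesis unfolding tate_eq_def e1 .
qed

lemma tate_eq_difference:
  fixes m1 m2 m3 m4 m6 t a b :: complex
  assumes "tate_eq m1 m2 m3 m4 m6 t a" "tate_eq m1 m2 m3 m4 m6 t b"
  shows "(a - b) * (1 - m1 * t - m2 * t^2 - m3 * (a + b) - m4 * t * (a + b) - m6 * (a^2 + a*b + b^2)) = 0"
proof -
  have ea: "a = t ^ 3 + m1 * t * a + m2 * t ^ 2 * a + m3 * a ^ 2 + m4 * t * a ^ 2 + m6 * a ^ 3"
    and eb: "b = t ^ 3 + m1 * t * b + m2 * t ^ 2 * b + m3 * b ^ 2 + m4 * t * b ^ 2 + m6 * b ^ 3"
    using assms unfolding tate_eq_def by auto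
  have "a - b = (t ^ 3 + m1 * t * a + m2 * t ^ 2 * a + m3 * a ^ 2 + m4 * t * a ^ 2 + m6 * a ^ 3)
     - (t ^ 3 + m1 * t * b + m2 * t ^ 2 * b + m3 * b ^ 2 + m4 * t * b ^ 2 + m6 * b ^ 3)"
    by (rule arg_cong2[of _ _ _ _ "(-)"]) (rule ea, rule eb)
  then show ?thesis by (simp add: algebra_simps power2_eq_square power3_eq_cube)
qed

locale tate_uniformization = weierstrass g2 g3 \<sigma> + tate_curve m1 m2 m3 m4 m6 s rs
  for g2 g3 \<sigma> m1 m2 m3 m4 m6 s rs +
  assumes g2: "g2 = (4 * m2 + m1 ^ 2) ^ 2 / 12 - 2 * (m1 * m3 + 2 * m4)"
    and g3: "g3 = (m1 * m3 + 2 * m4) * (4 * m2 + m1 ^ 2) / 6 - (4 * m2 + m1 ^ 2) ^ 3 / 216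
               - 4 * m6 - m3 ^ 2"
begin

text \<open>(wx, wy) are the coordinates of the long Weierstrass model, and (t_wp, s_wp) the Tate
  coordinates of the point with parameter u.  The pole u = 0 is the neutral element O, so t_wp is
  given the value 0 there.\<close>

definition "wx u = \<P> u - (4 * m2 + m1 ^ 2) / 12"
definition "wy u = (\<P>' u - m1 * wx u - m3) / 2"
definition "t_wp u = (if u = 0 then 0 else - wx u / wy u)"
definition "s_wp u = - 1 / wy u"

lemma t_wp_near_0:
  "eventually (\<lambda>u. u \<in> regular \<and> u \<noteq> 0 \<and> wy u \<noteq> 0) (at 0)" "(t_wp \<longlongrightarrow> 0) (at 0)" "(s_wp \<longlongrightarrow> 0) (at 0)"
proof -
  obtain r k m n where r: "r > 0" "m holomorphic_on ball 0 r" "n holomorphic_on ball 0 r"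
    "\<And>u. u \<in> ball 0 r \<Longrightarrow> u \<noteq> 0 \<Longrightarrow> u \<in> regular"
    "\<And>u. u \<in> ball 0 r \<Longrightarrow> u \<noteq> 0 \<Longrightarrow> \<P> u = 1 / u ^ 2 + u ^ 2 * m u"
    "\<And>u. u \<in> ball 0 r \<Longrightarrow> u \<noteq> 0 \<Longrightarrow> \<P>' u = -2 / u ^ 3 + u * n u"
    by (rule laurent_expansions) blast
  define x2 where "x2 u = 1 - (4 * m2 + m1 ^ 2) / 12 * u ^ 2 + u ^ 4 * m u" for u
  define y3 where "y3 u = (-2 + u ^ 4 * n u - m1 * u * x2 u - m3 * u ^ 3) / 2" for u
  have x2: "(x2 \<longlongrightarrow> 1) (at 0)"
    unfolding x2_def[abs_def] using tendsto_holomorphic_on[OF r(2) open_ball, of 0] r(1)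
    by (auto intro!: tendsto_eq_intros)
  have y3: "(y3 \<longlongrightarrow> -1) (at 0)"
    unfolding y3_def[abs_def] using tendsto_holomorphic_on[OF r(3) open_ball, of 0] r(1) x2
    by (auto intro!: tendsto_eq_intros)
  have near: "eventually (\<lambda>u. u \<in> regular \<and> u \<noteq> 0 \<and> wy u \<noteq> 0 \<and> t_wp u = - u * x2 u / y3 u
      \<and> s_wp u = - (u ^ 3) / y3 u) (at 0)"
    using eventually_at_ball'[OF r(1), of 0 UNIV] tendsto_imp_eventually_ne[OF y3 neg_one_neq_zero]
  proof eventually_elim
    case (elim u)
    then have u: "u \<in> ball 0 r" "u \<noteq> 0" by auto
    have x: "wx u = x2 u / u ^ 2" using u(2)
      by (simp add: wx_def x2_def r(5)[OF u] field_simps power_numeral_reduce)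
    have y: "wy u = y3 u / u ^ 3" using u(2)
      by (simp add: wy_def y3_def x r(6)[OF u] field_simps power_numeral_reduce)
    have "t_wp u = - u * x2 u / y3 u" using u(2) by (simp add: t_wp_def x y field_simps power_numeral_reduce)
    moreover have "s_wp u = - (u ^ 3) / y3 u" using u(2) by (simp add: s_wp_def y)
    ultimately show ?case using elim r(4)[OF u] y by simp
  qed
  then show "eventually (\<lambda>u. u \<in> regular \<and> u \<noteq> 0 \<and> wy u \<noteq> 0) (at 0)" by eventually_elim simp
  have "((\<lambda>u. - u * x2 u / y3 u) \<longlongrightarrow> 0) (at 0)"
    using x2 y3 by (auto intro!: tendsto_eq_intros)
  then show "(t_wp \<longlongrightarrow> 0) (at 0)"
    by (rule Lim_transform_eventually) (use near in \<open>eventually_elim, simp\<close>)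
  have "((\<lambda>u. - (u ^ 3) / y3 u) \<longlongrightarrow> 0) (at 0)"
    using y3 by (auto intro!: tendsto_eq_intros)
  then show "(s_wp \<longlongrightarrow> 0) (at 0)"
    by (rule Lim_transform_eventually) (use near in \<open>eventually_elim, simp\<close>)
qed

lemma tate_eq_wp: assumes "u \<in> regular" "u \<noteq> 0" "wy u \<noteq> 0" shows "tate_eq m1 m2 m3 m4 m6 (t_wp u) (s_wp u)"
proof -
  have c: "(wy u)^2 + m1 * wx u * wy u + m3 * wy u = (wx u)^3 + m2 * (wx u)^2 + m4 * wx u + m6"
    by (rule long_weierstrass_eq_of_wp[OF g2 g3 wp_differential_eq[OF assms(1)]]) (simp_all add: wx_def wy_def)
  show ?thesis unfolding t_wp_def s_wp_def using tate_eq_of_long_weierstrass[OF c assms(3)] assms(2) by simp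
qed

text \<open>The Tate equation has only one solution s near 0 for t near 0: the difference of two
  solutions is killed by a factor that tends to 1.\<close>

lemma s_t_wp: "eventually (\<lambda>u. s (t_wp u) = s_wp u) (at 0)"
proof -
  have st: "((\<lambda>u. s (t_wp u)) \<longlongrightarrow> 0) (at 0)"
    using isCont_tendsto_compose[OF isCont_s_0 t_wp_near_0(2)] by (simp add: s_0)
  define B where "B u = 1 - m1 * t_wp u - m2 * (t_wp u) ^ 2 - m3 * (s_wp u + s (t_wp u))
    - m4 * t_wp u * (s_wp u + s (t_wp u)) - m6 * ((s_wp u) ^ 2 + s_wp u * s (t_wp u) + (s (t_wp u)) ^ 2)" for u
  have "(B \<longlongrightarrow> 1) (at 0)"
    unfolding B_def[abs_def] using t_wp_near_0(2,3) st by (auto intro!: tendsto_eq_intros)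
  then have "eventually (\<lambda>u. B u \<noteq> 0) (at 0)" by (rule tendsto_imp_eventually_ne) simp
  moreover have "eventually (\<lambda>u. t_wp u \<in> ball 0 rs) (at 0)"
    using t_wp_near_0(2) open_ball by (rule topological_tendstoD) (use rs_pos in simp)
  ultimately show ?thesis using t_wp_near_0(1)
  proof eventually_elim
    case (elim u)
    have "(s_wp u - s (t_wp u)) * B u = 0"
      unfolding B_def by (rule tate_eq_difference[OF tate_eq_wp s_tate_eq]) (use elim in auto)
    with elim show ?case by simp
  qed
qed

lemma t_wp_ode: "eventually (\<lambda>u. (t_wp has_field_derivative inv_diff (t_wp u)) (at u)) (at 0)"
  using t_wp_near_0(1) s_t_wp
proof eventually_elim
  case (elim u)
  then have u: "u \<in> regular" "u \<noteq> 0" "wy u \<noteq> 0" by auto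
  have dx: "(wx has_field_derivative \<P>' u) (at u)"
    unfolding wx_def[abs_def] using wp_has_derivative[OF u(1)] by (auto intro!: derivative_eq_intros)
  have dy: "(wy has_field_derivative (\<P>'' u - m1 * \<P>' u) / 2) (at u)"
    unfolding wy_def[abs_def] using wp'_has_derivative[OF u(1)] dx by (auto intro!: derivative_eq_intros)
  have "((\<lambda>x. - wx x / wy x) has_field_derivative
      - (\<P>' u * wy u - wx u * ((\<P>'' u - m1 * \<P>' u) / 2)) / (wy u) ^ 2) (at u)"
    using DERIV_divide[OF DERIV_minus[OF dx] dy u(3)] by (simp add: power2_eq_square)
  moreover have "eventually (\<lambda>x. x \<in> - {0}) (nhds u)"
    by (rule eventually_nhds_in_open) (use u(2) in \<open>auto simp: open_Compl\<close>)
  then have "eventually (\<lambda>x. - wx x / wy x = t_wp x) (nhds u)" by eventually_elim (simp add: t_wp_def)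
  moreover have "- (\<P>' u * wy u - wx u * ((\<P>'' u - m1 * \<P>' u) / 2)) / (wy u) ^ 2 = inv_diff (t_wp u)"
    using tate_t_derivative_identity[OF g2 g3 wp_differential_eq[OF u(1)] wp''_eq[OF u(1)] _ _ u(3)] elim
    by (simp add: inv_diff_def t_wp_def s_wp_def wx_def wy_def)
  ultimately show ?case by (simp add: DERIV_cong_ev)
qed

end

lemma reciprocal_tate_t_identity:
  fixes zu zv zvm zvp pu pv qu qv qw m1 m3 fu \<alpha> :: complex
  assumes zvp: "zvp = zv + zu + (qv - qu) / (pv - pu) / 2"
    and zvm: "zvm = zv - zu + (qv + qu) / (pv - pu) / 2"
    and ne: "pv \<noteq> pu" and \<alpha>: "\<alpha> = qw / qv" and qv: "qv \<noteq> 0" and m3: "m3 = - qw"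
    and fu: "fu = - (pu - pv) / ((qu - m1 * (pu - pv) - m3) / 2)" and fu_nz: "fu \<noteq> 0"
  shows "1 / fu = m1 / 2 + zu + (1 + \<alpha>) / 2 * zvm - (1 - \<alpha>) / 2 * zvp - \<alpha> * zv"
proof -
  have d: "pv - pu \<noteq> 0" using ne by simp
  have "(qu - m1 * (pu - pv) - m3) / 2 \<noteq> 0" using fu_nz fu by auto
  then have "1 / fu = m1 / 2 + (qu + \<alpha> * qv) / (2 * (pv - pu))"
    unfolding fu m3 \<alpha> using d qv by (simp add: field_simps)
  also have "\<dots> = m1 / 2 + zu + (1 + \<alpha>) / 2 * zvm - (1 - \<alpha>) / 2 * zvp - \<alpha> * zv"
  proof -
    define E where "E = 1 / (pv - pu)"
    have E: "(qv - qu) / (pv - pu) / 2 = (qv - qu) * E / 2" "(qv + qu) / (pv - pu) / 2 = (qv + qu) * E / 2"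
      "(qu + \<alpha> * qv) / (2 * (pv - pu)) = (qu + \<alpha> * qv) * E / 2" unfolding E_def by simp_all
    show ?thesis unfolding zvp zvm E by (simp add: field_simps)
  qed
  finally show ?thesis .
qed

locale uniformized_exponential = tate_uniformization + formal_group_exponential
begin

lemma f_eq_t_wp: "eventually (\<lambda>u. f u = t_wp u) (at 0)"
proof (rule autonomous_ode_unique[OF inv_diff_holomorphic inv_diff_0 rs_pos f_0 isCont_f_0 f_ode])
  show "t_wp 0 = 0" by (simp add: t_wp_def)
  then show "isCont t_wp 0" using t_wp_near_0(2) by (simp add: isCont_def)
qed (rule t_wp_ode)

lemma reciprocal_f_eq:
  assumes v: "v \<in> regular" "\<P> v = (4 * m2 + m1 ^ 2) / 12" "\<P>' v \<noteq> 0" and w: "\<P>' w = - m3"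
  defines "\<alpha> \<equiv> \<P>' w / \<P>' v"
  shows "eventually (\<lambda>u. u \<in> regular \<and> v - u \<in> regular \<and> v + u \<in> regular \<and> f u \<noteq> 0 \<and>
    1 / f u = m1 / 2 + \<zeta> u + (1 + \<alpha>) / 2 * \<zeta> (v - u) - (1 - \<alpha>) / 2 * \<zeta> (v + u) - \<alpha> * \<zeta> v) (at 0)"
  using t_wp_near_0(1) f_eq_t_wp f_nonzero_near_0 eventually_regular_shift[OF v(1)]
proof eventually_elim
  case (elim u)
  then have u: "u \<in> regular" "u \<noteq> 0" "f u = t_wp u" "f u \<noteq> 0" by auto
  have f_u: "f u = - (\<P> u - \<P> v) / ((\<P>' u - m1 * (\<P> u - \<P> v) - m3) / 2)"
    using u by (simp add: t_wp_def wx_def wy_def v(2))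
  then have ne: "\<P> v \<noteq> \<P> u" using u(4) by auto
  have "\<zeta> (v + u) = \<zeta> v + \<zeta> u + (\<P>' v - \<P>' u) / (\<P> v - \<P> u) / 2"
    using zeta_addition[OF v(1) u(1)] elim ne by simp
  moreover have "\<zeta> (v - u) = \<zeta> v - \<zeta> u + (\<P>' v + \<P>' u) / (\<P> v - \<P> u) / 2"
    using zeta_addition[OF v(1) regular_minus[OF u(1)]] elim ne
    by (simp add: zeta_minus wp_minus[OF u(1)] wp'_minus[OF u(1)])
  ultimately have "1 / f u = m1 / 2 + \<zeta> u + (1 + \<alpha>) / 2 * \<zeta> (v - u) - (1 - \<alpha>) / 2 * \<zeta> (v + u) - \<alpha> * \<zeta> v"
    using reciprocal_tate_t_identity[OF _ _ ne meta_eq_to_obj_eq[OF \<alpha>_def] v(3) _ f_u u(4)] w by simp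
  with elim show ?case by simp
qed

end

section \<open>The exponential of the Krichever genus\<close>

lemma eventually_reciprocal_eq_of_log_derivatives:
  fixes \<Psi> G k :: "complex \<Rightarrow> complex"
  assumes \<Psi>: "eventually (\<lambda>u. (\<Psi> has_field_derivative - \<Psi> u * k u) (at u)) (at 0)"
    and G: "eventually (\<lambda>u. (G has_field_derivative G u * k u) (at u)) (at 0)"
    and lim: "((\<lambda>u. \<Psi> u * G u) \<longlongrightarrow> 1) (at 0)"
  shows "eventually (\<lambda>u. 1 / \<Psi> u = G u) (at 0)"
proof -
  have "eventually (\<lambda>u. ((\<lambda>u. \<Psi> u * G u) has_field_derivative 0) (at u)) (at 0)"
    using \<Psi> G by eventually_elim (drule (1) DERIV_mult, simp add: algebra_simps)
  from eventually_eq_limit_if_deriv_zero[OF this lim] show ?thesis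
  proof eventually_elim
    case (elim u)
    then have "\<Psi> u \<noteq> 0" by auto
    with elim show ?case by (simp add: field_simps)
  qed
qed

context weierstrass
begin

lemma sigma_over_id_tendsto: "((\<lambda>u. \<sigma> u / u) \<longlongrightarrow> 1) (at 0)"
proof -
  obtain h where h: "h holomorphic_on UNIV" "\<And>u. \<sigma> u = u + u ^ 5 * h u"
    using sigma_expansion by blast
  have "((\<lambda>u. 1 + u ^ 4 * h u) \<longlongrightarrow> 1 + 0 ^ 4 * h 0) (at 0)"
    using tendsto_holomorphic_on[OF h(1) open_UNIV] by (intro tendsto_intros) auto
  moreover have "eventually (\<lambda>u. 1 + u ^ 4 * h u = \<sigma> u / u) (at (0::complex))"
    by (auto simp: eventually_at_filter h(2) field_simps power_numeral_reduce)
  ultimately show ?thesis by (simp add: tendsto_cong)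
qed

text \<open>phi_ratio v u is \<Phi>(u;v)/\<Phi>(u;-v) (wPhi_ratio).\<close>

definition phi_ratio :: "complex \<Rightarrow> complex \<Rightarrow> complex" where
  "phi_ratio v u = \<sigma> (v - u) / \<sigma> (v + u) * exp (2 * \<zeta> v * u)"

text \<open>The right-hand side of the theorem, with the power written through the principal
  logarithm and \<Phi>(u;v)^-1 expanded.\<close>

definition krichever_exp :: "complex \<Rightarrow> complex \<Rightarrow> complex \<Rightarrow> complex \<Rightarrow> complex" where
  "krichever_exp c \<beta> v u =
     \<sigma> u * \<sigma> v / \<sigma> (v - u) * exp (- \<zeta> v * u) * exp (c * u) * exp (\<beta> * Ln (phi_ratio v u))"

lemma phi_ratio_tendsto: "\<sigma> v \<noteq> 0 \<Longrightarrow> (phi_ratio v \<longlongrightarrow> 1) (at 0)"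
proof -
  assume v: "\<sigma> v \<noteq> 0"
  have "((\<lambda>u. \<sigma> (v - u)) \<longlongrightarrow> \<sigma> v) (at 0)" "((\<lambda>u. \<sigma> (v + u)) \<longlongrightarrow> \<sigma> v) (at 0)"
    by (auto intro!: isCont_tendsto_compose[OF isCont_sigma] tendsto_eq_intros)
  then have "(phi_ratio v \<longlongrightarrow> \<sigma> v / \<sigma> v * exp (2 * \<zeta> v * 0)) (at 0)"
    unfolding phi_ratio_def[abs_def] using v by (intro tendsto_intros tendsto_ident_at) auto
  with v show ?thesis by simp
qed

lemma wPhi_ratio:
  assumes "\<sigma> u \<noteq> 0" "\<sigma> v \<noteq> 0" "\<sigma> (v + u) \<noteq> 0"
  shows "wPhi \<sigma> u v / wPhi \<sigma> u (- v) = phi_ratio v u"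
proof -
  have "- v - u = - (v + u)" by simp
  then have "\<sigma> (- v - u) = - \<sigma> (v + u)" by (metis sigma_minus)
  moreover have "exp (2 * \<zeta> v * u) = exp (\<zeta> v * u) * exp (\<zeta> v * u)"
    by (simp add: exp_add[symmetric] algebra_simps)
  ultimately show ?thesis
    using assms by (simp add: wPhi_def phi_ratio_def sigma_minus zeta_minus exp_minus field_simps)
qed

lemma krichever_exp_eq_wPhi:
  assumes "\<sigma> u \<noteq> 0" "\<sigma> v \<noteq> 0" "\<sigma> (v - u) \<noteq> 0" "\<sigma> (v + u) \<noteq> 0" "phi_ratio v u \<noteq> 0"
  shows "inverse (wPhi \<sigma> u v) * exp (c * u) * (wPhi \<sigma> u v / wPhi \<sigma> u (- v)) powr \<beta>
    = krichever_exp c \<beta> v u"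
proof -
  have "inverse (wPhi \<sigma> u v) = \<sigma> u * \<sigma> v / \<sigma> (v - u) * exp (- \<zeta> v * u)"
    using assms by (simp add: wPhi_def exp_minus field_simps)
  then show ?thesis
    using assms by (simp add: wPhi_ratio powr_def krichever_exp_def)
qed

lemma krichever_exp_over_id_tendsto:
  assumes "\<sigma> v \<noteq> 0"
  shows "((\<lambda>u. krichever_exp c \<beta> v u / u) \<longlongrightarrow> 1) (at 0)"
proof -
  have "isCont Ln 1" by (rule DERIV_isCont[OF has_field_derivative_Ln]) (auto simp: complex_nonpos_Reals_iff)
  from isCont_tendsto_compose[OF this phi_ratio_tendsto[OF assms]]
  have "((\<lambda>u. Ln (phi_ratio v u)) \<longlongrightarrow> 0) (at 0)" by simp
  moreover have "((\<lambda>u. \<sigma> (v - u)) \<longlongrightarrow> \<sigma> v) (at 0)"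
    by (auto intro!: isCont_tendsto_compose[OF isCont_sigma] tendsto_eq_intros)
  ultimately have "((\<lambda>u. \<sigma> u / u * \<sigma> v / \<sigma> (v - u) * exp (- \<zeta> v * u) * exp (c * u)
      * exp (\<beta> * Ln (phi_ratio v u))) \<longlongrightarrow> 1 * \<sigma> v / \<sigma> v * exp (- \<zeta> v * 0) * exp (c * 0) * exp (\<beta> * 0)) (at 0)"
    using assms sigma_over_id_tendsto by (intro tendsto_intros tendsto_ident_at) auto
  then show ?thesis using assms by (simp add: krichever_exp_def mult.commute)
qed

lemma sigma_log_derivative: "u \<in> regular \<Longrightarrow> (\<sigma> has_field_derivative \<sigma> u * \<zeta> u) (at u)"
  using sigma_has_derivative[of u] by (simp add: wzeta_def regular_def)

lemma phi_ratio_has_derivative: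
  assumes "v - u \<in> regular" "v + u \<in> regular"
  shows "(phi_ratio v has_field_derivative phi_ratio v u * (2 * \<zeta> v - \<zeta> (v - u) - \<zeta> (v + u))) (at u)"
proof -
  have "((\<lambda>x. \<sigma> (v - x) / \<sigma> (v + x)) has_field_derivative
      (- deriv \<sigma> (v - u) * \<sigma> (v + u) - \<sigma> (v - u) * (deriv \<sigma> (v + u) * 1)) / (\<sigma> (v + u) * \<sigma> (v + u))) (at u)"
    using assms
    by (intro DERIV_divide DERIV_reflect sigma_has_derivative DERIV_chain2[OF sigma_has_derivative]
          derivative_eq_intros) (auto simp: regular_def)
  then have "((\<lambda>x. \<sigma> (v - x) / \<sigma> (v + x)) has_field_derivative
      \<sigma> (v - u) / \<sigma> (v + u) * (- \<zeta> (v - u) - \<zeta> (v + u))) (at u)"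
    by (rule DERIV_cong) (use assms in \<open>simp add: wzeta_def regular_def field_simps\<close>)
  moreover have "((\<lambda>x. exp (2 * \<zeta> v * x)) has_field_derivative exp (2 * \<zeta> v * u) * (2 * \<zeta> v)) (at u)"
    by (auto intro!: derivative_eq_intros)
  ultimately show ?thesis
    unfolding phi_ratio_def[abs_def] using DERIV_mult_logarithmic by (fastforce simp: algebra_simps)
qed

lemma krichever_exp_has_derivative:
  assumes u: "u \<in> regular" "v - u \<in> regular" "v + u \<in> regular" and v: "v \<in> regular"
    and pos: "Re (phi_ratio v u) > 0"
  shows "(krichever_exp c \<beta> v has_field_derivative krichever_exp c \<beta> v u
    * (c + \<zeta> u + (1 - \<beta>) * \<zeta> (v - u) - \<beta> * \<zeta> (v + u) + (2 * \<beta> - 1) * \<zeta> v)) (at u)"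
proof -
  have quot: "((\<lambda>x. \<sigma> v / \<sigma> (v - x)) has_field_derivative \<sigma> v / \<sigma> (v - u) * \<zeta> (v - u)) (at u)"
  proof -
    have "((\<lambda>x. \<sigma> v / \<sigma> (v - x)) has_field_derivative
        (0 * \<sigma> (v - u) - \<sigma> v * (- deriv \<sigma> (v - u))) / (\<sigma> (v - u) * \<sigma> (v - u))) (at u)"
      using u(2) by (intro DERIV_divide DERIV_const DERIV_reflect sigma_has_derivative) (auto simp: regular_def)
    then show ?thesis by (rule DERIV_cong) (use u(2) in \<open>simp add: wzeta_def regular_def field_simps\<close>)
  qed
  have lin: "((\<lambda>x. exp (a * x)) has_field_derivative exp (a * u) * a) (at u)" for a
    by (auto intro!: derivative_eq_intros)
  have "phi_ratio v u \<noteq> 0" using pos by auto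
  then have "((\<lambda>x. Ln (phi_ratio v x)) has_field_derivative 2 * \<zeta> v - \<zeta> (v - u) - \<zeta> (v + u)) (at u)"
    using DERIV_chain2[OF has_field_derivative_Ln phi_ratio_has_derivative[OF u(2,3)]] pos
    by (auto simp: complex_nonpos_Reals_iff mult.assoc[symmetric])
  from DERIV_chain2[OF DERIV_exp DERIV_cmult[OF this, of \<beta>]]
  have power: "((\<lambda>x. exp (\<beta> * Ln (phi_ratio v x))) has_field_derivative
      exp (\<beta> * Ln (phi_ratio v u)) * (\<beta> * (2 * \<zeta> v - \<zeta> (v - u) - \<zeta> (v + u)))) (at u)" by simp
  have "((\<lambda>x. \<sigma> x * (\<sigma> v / \<sigma> (v - x)) * exp (- \<zeta> v * x) * exp (c * x)
      * exp (\<beta> * Ln (phi_ratio v x))) has_field_derivative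
      \<sigma> u * (\<sigma> v / \<sigma> (v - u)) * exp (- \<zeta> v * u) * exp (c * u) * exp (\<beta> * Ln (phi_ratio v u))
      * (\<zeta> u + \<zeta> (v - u) + - \<zeta> v + c + \<beta> * (2 * \<zeta> v - \<zeta> (v - u) - \<zeta> (v + u)))) (at u)"
    by (intro DERIV_mult_logarithmic sigma_log_derivative u(1) quot lin power)
  moreover have "krichever_exp c \<beta> v = (\<lambda>x. \<sigma> x * (\<sigma> v / \<sigma> (v - x)) * exp (- \<zeta> v * x)
      * exp (c * x) * exp (\<beta> * Ln (phi_ratio v x)))"
    by (simp add: fun_eq_iff krichever_exp_def)
  ultimately show ?thesis by (simp add: algebra_simps)
qed

end

lemma tendsto_mult_simple_pole:
  fixes \<Psi> :: "complex \<Rightarrow> complex"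
  assumes "((\<lambda>u. \<Psi> u - 1 / u) \<longlongrightarrow> L) (at 0)"
  shows "((\<lambda>u. u * \<Psi> u) \<longlongrightarrow> 1) (at 0)"
proof -
  have "((\<lambda>u. u * (\<Psi> u - 1 / u) + 1) \<longlongrightarrow> 0 * L + 1) (at 0)"
    by (intro tendsto_intros assms tendsto_ident_at)
  moreover have "eventually (\<lambda>u. u * (\<Psi> u - 1 / u) + 1 = u * \<Psi> u) (at (0::complex))"
    by (auto simp: eventually_at_filter right_diff_distrib)
  ultimately show ?thesis by (simp add: tendsto_cong)
qed

context uniformized_exponential
begin

lemma krichever_exp_log_derivative:
  assumes v: "\<sigma> v \<noteq> 0" "\<P> v = (4 * m2 + m1 ^ 2) / 12" "\<P>' v \<noteq> 0" and w: "\<P>' w = - m3"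
  defines "\<beta> \<equiv> (1 - \<P>' w / \<P>' v) / 2"
  shows "eventually (\<lambda>u. (krichever_exp (m1 / 2) \<beta> v has_field_derivative krichever_exp (m1 / 2) \<beta> v u * (1 / f u))
    (at u) \<and> \<sigma> u \<noteq> 0 \<and> \<sigma> (v - u) \<noteq> 0 \<and> \<sigma> (v + u) \<noteq> 0 \<and> phi_ratio v u \<noteq> 0) (at 0)"
proof -
  define \<alpha> where "\<alpha> = \<P>' w / \<P>' v"
  have v_reg: "v \<in> regular" using v(1) by (simp add: regular_def)
  have "((\<lambda>u. Re (phi_ratio v u)) \<longlongrightarrow> Re 1) (at 0)" by (rule tendsto_Re[OF phi_ratio_tendsto[OF v(1)]])
  then have "eventually (\<lambda>u. Re (phi_ratio v u) > 0) (at 0)" by (rule order_tendstoD) simp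
  with reciprocal_f_eq[OF v_reg v(2,3) w] show ?thesis
  proof eventually_elim
    case (elim u)
    then have "(krichever_exp (m1 / 2) \<beta> v has_field_derivative krichever_exp (m1 / 2) \<beta> v u
        * (m1 / 2 + \<zeta> u + (1 - \<beta>) * \<zeta> (v - u) - \<beta> * \<zeta> (v + u) + (2 * \<beta> - 1) * \<zeta> v)) (at u)"
      using krichever_exp_has_derivative[OF _ _ _ v_reg] by blast
    moreover have "m1 / 2 + \<zeta> u + (1 - \<beta>) * \<zeta> (v - u) - \<beta> * \<zeta> (v + u) + (2 * \<beta> - 1) * \<zeta> v = 1 / f u"
      using elim by (simp add: \<beta>_def flip: \<alpha>_def) (simp add: field_simps)
    ultimately show ?case using elim by (auto simp: regular_def)
  qed
qed

lemma reciprocal_eq_krichever_exp: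
  assumes v: "\<sigma> v \<noteq> 0" "\<P> v = (4 * m2 + m1 ^ 2) / 12" "\<P>' v \<noteq> 0" and w: "\<P>' w = - m3"
    and rp: "rp > 0"
    and \<Psi>_ode: "\<forall>u \<in> ball 0 rp - {0}. (\<Psi> has_field_derivative (- \<Psi> u / f u)) (at u)"
    and \<Psi>_lim: "((\<lambda>u. \<Psi> u - 1 / u) \<longlongrightarrow> L) (at 0)"
  defines "\<beta> \<equiv> (1 - \<P>' w / \<P>' v) / 2"
  shows "eventually (\<lambda>u. 1 / \<Psi> u = krichever_exp (m1 / 2) \<beta> v u \<and> \<sigma> u \<noteq> 0 \<and> \<sigma> (v - u) \<noteq> 0
    \<and> \<sigma> (v + u) \<noteq> 0 \<and> phi_ratio v u \<noteq> 0) (at 0)"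
proof -
  note R = krichever_exp_log_derivative[OF v w, folded \<beta>_def]
  have "eventually (\<lambda>u. (\<Psi> has_field_derivative - \<Psi> u * (1 / f u)) (at u)) (at 0)"
    using eventually_at_ball'[OF rp, of 0 UNIV] by eventually_elim (use \<Psi>_ode in simp)
  moreover have "eventually (\<lambda>u. (krichever_exp (m1 / 2) \<beta> v has_field_derivative
      krichever_exp (m1 / 2) \<beta> v u * (1 / f u)) (at u)) (at 0)"
    using R by eventually_elim simp
  moreover have "((\<lambda>u. \<Psi> u * krichever_exp (m1 / 2) \<beta> v u) \<longlongrightarrow> 1) (at 0)"
  proof -
    have "((\<lambda>u. u * \<Psi> u * (krichever_exp (m1 / 2) \<beta> v u / u)) \<longlongrightarrow> 1 * 1) (at 0)"
      by (intro tendsto_mult tendsto_mult_simple_pole[OF \<Psi>_lim] krichever_exp_over_id_tendsto v(1))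
    moreover have "eventually (\<lambda>u. u * \<Psi> u * (krichever_exp (m1 / 2) \<beta> v u / u)
        = \<Psi> u * krichever_exp (m1 / 2) \<beta> v u) (at (0::complex))"
      by (auto simp: eventually_at_filter)
    ultimately show ?thesis by (simp add: tendsto_cong)
  qed
  ultimately have "eventually (\<lambda>u. 1 / \<Psi> u = krichever_exp (m1 / 2) \<beta> v u) (at 0)"
    by (rule eventually_reciprocal_eq_of_log_derivatives)
  with R show ?thesis by eventually_elim simp
qed

end

theorem mainTheorem17:
  fixes m1 m2 m3 m4 m6 g2 g3 v w :: complex
    and \<sigma> s f \<Psi> :: "complex \<Rightarrow> complex"
    and rs rf rp :: real
  assumes g2: "g2 = (4 * m2 + m1 ^ 2) ^ 2 / 12 - 2 * (m1 * m3 + 2 * m4)"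
    and g3: "g3 = (m1 * m3 + 2 * m4) * (4 * m2 + m1 ^ 2) / 6 - (4 * m2 + m1 ^ 2) ^ 3 / 216
               - 4 * m6 - m3 ^ 2"
    and disc: "g2 ^ 3 - 27 * g3 ^ 2 \<noteq> 0"
    and sigma: "is_weierstrass_sigma g2 g3 \<sigma>"
    and v_reg: "\<sigma> v \<noteq> 0"
    and v_val: "wp \<sigma> v = (4 * m2 + m1 ^ 2) / 12"
    and v_der: "deriv (wp \<sigma>) v \<noteq> 0"
    and w_reg: "\<sigma> w \<noteq> 0"
    and w_der: "deriv (wp \<sigma>) w = - m3"
    and s: "tate_s m1 m2 m3 m4 m6 rs s"
    and f: "fgl_exponential m1 m2 m3 m4 m6 s rf f"
    and rp: "rp > 0"
    and Psi_ode: "\<forall>u \<in> ball 0 rp - {0}. (\<Psi> has_field_derivative (- \<Psi> u / f u)) (at u)"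
    and Psi_lim: "\<exists>L. ((\<lambda>u. \<Psi> u - 1 / u) \<longlongrightarrow> L) (at 0)"
  shows "\<exists>r>0. \<forall>u \<in> ball 0 r - {0}.
           1 / \<Psi> u = inverse (wPhi \<sigma> u v) * exp (m1 / 2 * u)
             * (wPhi \<sigma> u v / wPhi \<sigma> u (- v))
                 powr ((1 - deriv (wp \<sigma>) w / deriv (wp \<sigma>) v) / 2)"
proof -
  interpret uniformized_exponential g2 g3 \<sigma> m1 m2 m3 m4 m6 s rs f rf
    by unfold_locales (fact sigma s g2 g3 f)+
  obtain L where L: "((\<lambda>u. \<Psi> u - 1 / u) \<longlongrightarrow> L) (at 0)" using Psi_lim by blast
  have "eventually (\<lambda>u. 1 / \<Psi> u = inverse (wPhi \<sigma> u v) * exp (m1 / 2 * u)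
      * (wPhi \<sigma> u v / wPhi \<sigma> u (- v)) powr ((1 - deriv (wp \<sigma>) w / deriv (wp \<sigma>) v) / 2)) (at 0)"
    using reciprocal_eq_krichever_exp[OF v_reg v_val v_der w_der rp Psi_ode L]
  proof eventually_elim
    case (elim u)
    have "inverse (wPhi \<sigma> u v) * exp (m1 / 2 * u) * (wPhi \<sigma> u v / wPhi \<sigma> u (- v))
        powr ((1 - deriv (wp \<sigma>) w / deriv (wp \<sigma>) v) / 2)
      = krichever_exp (m1 / 2) ((1 - deriv (wp \<sigma>) w / deriv (wp \<sigma>) v) / 2) v u"
      using elim v_reg by (intro krichever_exp_eq_wPhi) auto
    with elim show ?case by simp
  qed
  then obtain r where "r > 0" "\<forall>u. u \<noteq> 0 \<and> dist u 0 < r \<longrightarrow> 1 / \<Psi> u = inverse (wPhi \<sigma> u v)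
      * exp (m1 / 2 * u) * (wPhi \<sigma> u v / wPhi \<sigma> u (- v)) powr ((1 - deriv (wp \<sigma>) w / deriv (wp \<sigma>) v) / 2)"
    unfolding eventually_at by blast
  then show ?thesis by (intro exI[of _ r]) (simp add: dist_norm)
qed

end
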